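(* Let $A$ be any $K$-algebra and suppose there are two short exact sequences of finite-dimensional $A$-modules $0\to x_2\to x\to x_1\to 0$ and $0\to x_1\to x\to x_3\to0$. Assume that $\operatorname{Ext}^1_A(x_1,x_1)=0$, $\dim\operatorname{Hom}_A(x_1,x_2)=\dim\operatorname{Hom}_A(x_1,x_3)$ and $\dim\operatorname{Hom}_A(x_2,x_1)=\dim\operatorname{Hom}_A(x_3,x_1)$. Then both short exact sequences split (and hence $x_3\simeq x_2$).
   Context: $K$ is a field (algebraically closed in the paper's setting). *)

theory Defs
  imports Complex_Main "HOL-Library.Function_Algebras" "HOL-Library.Product_Plus"
begin

definition k_algebra :: "('k::field \<Rightarrow> 'a::ring_1 \<Rightarrow> 'a) \<Rightarrow> bool" where
  "k_algebra sA \<longleftrightarrow> Vector_Spaces.vector_space sA \<and>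
     (\<forall>c a b. sA c (a * b) = sA c a * b \<and> sA c (a * b) = a * sA c b)"

definition a_module ::
  "('k::field \<Rightarrow> 'a::ring_1 \<Rightarrow> 'a) \<Rightarrow> ('k \<Rightarrow> 'v::ab_group_add \<Rightarrow> 'v) \<Rightarrow> ('a \<Rightarrow> 'v \<Rightarrow> 'v) \<Rightarrow> bool" where
  "a_module sA sV act \<longleftrightarrow> Vector_Spaces.vector_space sV \<and>
     (\<forall>a u v. act a (u + v) = act a u + act a v) \<and>
     (\<forall>a b v. act (a + b) v = act a v + act b v) \<and>
     (\<forall>v. act 1 v = v) \<and>
     (\<forall>a b v. act (a * b) v = act a (act b v)) \<and>
     (\<forall>c a v. act (sA c a) v = sV c (act a v) \<and> act a (sV c v) = sV c (act a v))"

definition fin_dim :: "('k::field \<Rightarrow> 'v::ab_group_add \<Rightarrow> 'v) \<Rightarrow> bool" where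
  "fin_dim sV \<longleftrightarrow> (\<exists>B. finite B \<and> Modules.module.span sV B = UNIV)"

definition mod_hom ::
  "('k::field \<Rightarrow> 'v::ab_group_add \<Rightarrow> 'v) \<Rightarrow> ('a \<Rightarrow> 'v \<Rightarrow> 'v) \<Rightarrow>
   ('k \<Rightarrow> 'w::ab_group_add \<Rightarrow> 'w) \<Rightarrow> ('a \<Rightarrow> 'w \<Rightarrow> 'w) \<Rightarrow> ('v \<Rightarrow> 'w) \<Rightarrow> bool" where
  "mod_hom sV actV sW actW f \<longleftrightarrow> Vector_Spaces.linear sV sW f \<and> (\<forall>a v. f (actV a v) = actW a (f v))"

definition hom_set where
  "hom_set sV actV sW actW = {f. mod_hom sV actV sW actW f}"

definition dim_hom ::
  "('k::field \<Rightarrow> 'v::ab_group_add \<Rightarrow> 'v) \<Rightarrow> ('a \<Rightarrow> 'v \<Rightarrow> 'v) \<Rightarrow>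
   ('k \<Rightarrow> 'w::ab_group_add \<Rightarrow> 'w) \<Rightarrow> ('a \<Rightarrow> 'w \<Rightarrow> 'w) \<Rightarrow> nat" where
  "dim_hom sV actV sW actW = Vector_Spaces.vector_space.dim (\<lambda>c f v. sW c (f v)) (hom_set sV actV sW actW)"

definition ses where
  "ses sM actM sN actN sP actP f g \<longleftrightarrow>
     mod_hom sM actM sN actN f \<and> mod_hom sN actN sP actP g \<and>
     inj f \<and> surj g \<and> range f = {n. g n = 0}"

definition ses_splits where
  "ses_splits sM actM sN actN sP actP f g \<longleftrightarrow>
     (\<exists>s. mod_hom sP actP sN actN s \<and> (\<forall>p. g (s p) = p))"

text \<open>Ext^1_A(M,M) = 0, in the Yoneda sense: every extension 0 \<rightarrow> M \<rightarrow> E \<rightarrow> M \<rightarrow> 0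
  splits. Every such E is K-linearly isomorphic to M \<times> M, so it suffices (and is
  equivalent) to let E range over all A-module structures on the type 'v \<times> 'v.\<close>
definition ext1_self_zero ::
  "('k::field \<Rightarrow> 'a::ring_1 \<Rightarrow> 'a) \<Rightarrow> ('k \<Rightarrow> 'v::ab_group_add \<Rightarrow> 'v) \<Rightarrow> ('a \<Rightarrow> 'v \<Rightarrow> 'v) \<Rightarrow> bool" where
  "ext1_self_zero sA sM actM \<longleftrightarrow>
     (\<forall>(sE :: 'k \<Rightarrow> 'v \<times> 'v \<Rightarrow> 'v \<times> 'v) actE f g.
        a_module sA sE actE \<longrightarrow> ses sM actM sE actE sM actM f g \<longrightarrow>
        ses_splits sM actM sE actE sM actM f g)"

definition mod_iso where
  "mod_iso sV actV sW actW \<longleftrightarrow> (\<exists>h. mod_hom sV actV sW actW h \<and> bij h)"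

end

theory Submission
  imports Defs
begin

text \<open>Apply \<open>Hom(x\<^sub>1, -)\<close> to both sequences and count dimensions. Since
  \<open>Ext\<^sup>1(x\<^sub>1, x\<^sub>1) = 0\<close>, every map \<open>x\<^sub>1 \<rightarrow> x\<^sub>3\<close> lifts to \<open>x\<close> (split the pullback
  extension), so \<open>dim Hom(x\<^sub>1, x) = dim Hom(x\<^sub>1, x\<^sub>1) + dim Hom(x\<^sub>1, x\<^sub>3)\<close>; with
  \<open>dim Hom(x\<^sub>1, x\<^sub>3) = dim Hom(x\<^sub>1, x\<^sub>2)\<close> and left exactness, the image of
  \<open>Hom(x\<^sub>1, x) \<rightarrow> Hom(x\<^sub>1, x\<^sub>1)\<close> is everything, so the identity lifts and the first
  sequence splits. Dually, \<open>Hom(-, x\<^sub>1)\<close> and the first splitting make the second sequence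
  split. Then \<open>x\<^sub>2 \<oplus> x\<^sub>1 \<cong> x \<cong> x\<^sub>1 \<oplus> x\<^sub>3\<close>, and \<open>x\<^sub>1\<close> cancels: by induction on the
  dimension, using Fitting's lemma (an endomorphism of an indecomposable finite-dimensional
  module is bijective or nilpotent) to exchange indecomposable summands.\<close>

section \<open>Finite-dimensional subspaces\<close>

context vector_space
begin

lemma independent_card_le_dim_finite_span:
  assumes "finite F" "S \<subseteq> span F" "independent B" "B \<subseteq> S"
  shows "finite B \<and> card B \<le> dim S"
proof -
  obtain BS where BS: "BS \<subseteq> S" "independent BS" "S \<subseteq> span BS" "card BS = dim S"
    by (rule basis_exists)
  have "finite BS"
    using independent_span_bound[OF assms(1) BS(2)] BS(1) assms(2) by auto
  then show ?thesis
    using independent_span_bound[OF _ assms(3)] BS assms(4) by fastforce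
qed

lemma dim_subset_finite_span:
  assumes "finite F" "T \<subseteq> span F" "S \<subseteq> T"
  shows "dim S \<le> dim T"
proof -
  obtain BS where "BS \<subseteq> S" "independent BS" "card BS = dim S"
    by (rule basis_exists)
  then show ?thesis
    using independent_card_le_dim_finite_span[OF assms(1,2)] assms(3) by fastforce
qed

lemma subspace_dim_equal_finite_span:
  assumes "finite F" "T \<subseteq> span F" "subspace S" "subspace T" "S \<subseteq> T" "dim T \<le> dim S"
  shows "S = T"
proof (rule ccontr)
  assume "S \<noteq> T"
  then obtain x where x: "x \<in> T" "x \<notin> S"
    using assms(5) by auto
  obtain BS where BS: "BS \<subseteq> S" "independent BS" "S \<subseteq> span BS" "card BS = dim S"
    by (rule basis_exists)
  have "span BS = S"
    using span_subspace[OF BS(1,3) assms(3)] .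
  then have "independent (insert x BS)"
    using independent_insertI[OF _ BS(2)] x by auto
  then have "card (insert x BS) \<le> dim T"
    using independent_card_le_dim_finite_span[OF assms(1,2)] x BS(1) assms(5) by auto
  moreover have "finite BS"
    using independent_card_le_dim_finite_span[OF assms(1,2) BS(2)] BS(1) assms(5) by auto
  moreover have "x \<notin> BS"
    using x BS(1) by auto
  ultimately show False
    using BS(4) assms(6) by auto
qed

lemma dim_psubset_finite_span:
  assumes "finite F" "T \<subseteq> span F" "subspace S" "subspace T" "S \<subset> T"
  shows "dim S < dim T"
  using dim_subset_finite_span[OF assms(1,2)] subspace_dim_equal_finite_span[OF assms(1-4)] assms(5)
  by fastforce

lemma span_Int_span_disjoint:
  assumes "independent (A \<union> C)" "A \<inter> C = {}"
  shows "span A \<inter> span C = {0}"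
proof -
  have "x = 0" if x: "x \<in> span A" "x \<in> span C" for x
  proof -
    have "representation (A \<union> C) x b = 0" for b
    proof (cases "b \<in> A")
      case True
      then have "representation C x b = 0"
        using representation_ne_zero[of C x b] assms(2) by blast
      then show ?thesis
        using representation_extend[OF assms(1) x(2)] by simp
    next
      case False
      then show ?thesis
        using representation_extend[OF assms(1) x(1)] representation_ne_zero[of A x b] by auto
    qed
    then show "x = 0"
      using sum_nonzero_representation_eq[OF assms(1)] x(1) span_mono[of A "A \<union> C"] by force
  qed
  then show ?thesis
    using span_zero by auto
qed

lemma exists_linear_extension_on_subspace:
  assumes S: "subspace S"
    and add: "\<And>x y. x \<in> S \<Longrightarrow> y \<in> S \<Longrightarrow> \<phi> (x + y) = \<phi> x + \<phi> y"
    and scale: "\<And>c x. x \<in> S \<Longrightarrow> \<phi> (scale c x) = scale c (\<phi> x)"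
  obtains g where "Vector_Spaces.linear scale scale g" "\<And>x. x \<in> S \<Longrightarrow> g x = \<phi> x"
proof -
  interpret vector_space_pair scale scale ..
  obtain B where B: "B \<subseteq> S" "independent B" "S \<subseteq> span B"
    by (rule basis_exists)
  obtain g where g: "Vector_Spaces.linear scale scale g" "\<forall>x\<in>B. g x = \<phi> x"
    using linear_independent_extend[OF B(2)] by blast
  interpret g: Vector_Spaces.linear scale scale g
    by (rule g(1))
  have "subspace {x \<in> S. g x = \<phi> x}"
  proof (rule subspaceI)
    show "0 \<in> {x \<in> S. g x = \<phi> x}"
      using add[of 0 0] subspace_0[OF S] by simp
  qed (use subspace_add[OF S] subspace_scale[OF S] add scale in \<open>auto simp: g.add g.scale\<close>)
  then have "span B \<subseteq> {x \<in> S. g x = \<phi> x}"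
    by (rule span_minimal[rotated]) (use B g in auto)
  then show ?thesis
    using that[OF g(1)] B(3) by blast
qed

end

context vector_space_pair
begin

text \<open>\<open>L\<close> maps \<open>B - BK\<close> injectively onto a basis of the image.\<close>
lemma dim_image_span_eq_card_Diff:
  assumes L: "Vector_Spaces.linear s1 s2 L" and B: "vs1.independent B" "BK \<subseteq> B"
    and kernel: "vs1.span B \<inter> {x. L x = 0} = vs1.span BK"
  shows "vs2.dim (L ` vs1.span B) = card (B - BK)"
proof -
  interpret L: Vector_Spaces.linear s1 s2 L by fact
  define C where "C = B - BK"
  have "vs1.span BK \<inter> vs1.span C = {0}"
    by (rule vs1.span_Int_span_disjoint) (use B in \<open>auto simp: C_def Un_absorb1\<close>)
  moreover have "vs1.span C \<subseteq> vs1.span B"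
    by (rule vs1.span_mono) (simp add: C_def)
  ultimately have inj: "inj_on L (vs1.span C)"
    using L.inj_on_iff_eq_0[of "vs1.span C"] kernel by auto
  have "L b \<in> vs2.span (L ` C)" if "b \<in> B" for b
  proof (cases "b \<in> BK")
    case True
    then have "b \<in> vs1.span BK"
      using vs1.span_superset by blast
    then have "L b = 0"
      using kernel by blast
    then show ?thesis
      using vs2.span_zero by simp
  next
    case False
    then have "L b \<in> L ` C"
      using that unfolding C_def by blast
    then show ?thesis
      using vs2.span_superset[of "L ` C"] by blast
  qed
  then have "L ` B \<subseteq> vs2.span (L ` C)"
    by blast
  moreover have "L ` C \<subseteq> vs2.span (L ` B)"
    using vs2.span_superset[of "L ` B"] unfolding C_def by blast
  ultimately have "vs2.span (L ` B) = vs2.span (L ` C)"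
    by (simp add: vs2.span_eq)
  then have "L ` vs1.span B = vs2.span (L ` C)"
    using L.span_image[of B] by simp
  moreover have "vs2.independent (L ` C)"
    using L.independent_injective_image[OF _ inj] vs1.independent_mono[OF B(1)]
    unfolding C_def by blast
  moreover have "card (L ` C) = card C"
    using card_image[OF inj_on_subset[OF inj vs1.span_superset]] .
  ultimately show ?thesis
    using vs2.dim_span_eq_card_independent unfolding C_def by simp
qed

lemma rank_nullity:
  assumes L: "Vector_Spaces.linear s1 s2 L" and F: "finite F" "S \<subseteq> vs1.span F"
    and S: "vs1.subspace S"
  shows "vs1.dim S = vs1.dim (S \<inter> {x. L x = 0}) + vs2.dim (L ` S)"
proof -
  define K where "K = S \<inter> {x. L x = 0}"
  have K: "vs1.subspace K"
    unfolding K_def by (rule vs1.subspace_inter[OF S linear_subspace_kernel[OF L]])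
  obtain BK where BK: "BK \<subseteq> K" "vs1.independent BK" "K \<subseteq> vs1.span BK" "card BK = vs1.dim K"
    by (rule vs1.basis_exists)
  obtain B where B: "BK \<subseteq> B" "B \<subseteq> S" "vs1.independent B" "S \<subseteq> vs1.span B"
    using vs1.maximal_independent_subset_extend[OF _ BK(2), of S] BK(1) unfolding K_def by blast
  have span_B: "vs1.span B = S"
    using vs1.span_subspace[OF B(2,4) S] .
  have "vs1.span BK = K"
    using vs1.span_subspace[OF BK(1,3) K] .
  then have "vs2.dim (L ` S) = card (B - BK)"
    using dim_image_span_eq_card_Diff[OF L B(3,1)] span_B unfolding K_def by simp
  moreover have "finite B"
    using vs1.independent_card_le_dim_finite_span[OF F B(3,2)] by blast
  then have "card B = card BK + card (B - BK)"
    using card_Diff_subset[OF _ B(1)] card_mono[OF _ B(1)] finite_subset[OF B(1)] by fastforce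
  ultimately show ?thesis
    using vs1.basis_card_eq_dim[OF B(2,4,3)] BK(4) unfolding K_def by simp
qed

lemma dim_image_eq_inj_on:
  assumes "Vector_Spaces.linear s1 s2 L" "finite F" "S \<subseteq> vs1.span F" "vs1.subspace S"
    and "inj_on L S"
  shows "vs2.dim (L ` S) = vs1.dim S"
proof -
  have "S \<inter> {x. L x = 0} = {0}"
    using assms(5) vs1.subspace_0[OF assms(4)] linear_0[OF assms(1)]
    unfolding inj_on_def by auto
  then show ?thesis
    using rank_nullity[OF assms(1-4)] vs1.dim_span[of "{}"]
      vs1.dim_eq_card_independent[OF vs1.independent_empty]
    by simp
qed

end

section \<open>Modules and spaces of homomorphisms\<close>

lemma
  assumes "a_module sA sV act"
  shows a_module_vector_space: "vector_space sV"
    and a_module_act_add: "act a (u + v) = act a u + act a v"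
    and a_module_act_add_left: "act (a + b) v = act a v + act b v"
    and a_module_act_one: "act 1 v = v"
    and a_module_act_mult: "act (a * b) v = act a (act b v)"
    and a_module_act_alg_scale: "act (sA c a) v = sV c (act a v)"
    and a_module_act_scale: "act a (sV c v) = sV c (act a v)"
  using assms unfolding a_module_def by blast+

lemma a_module_act_zero: "a_module sA sV act \<Longrightarrow> act a 0 = 0"
  using a_module_act_add[of sA sV act a 0 0] by simp

lemma a_module_act_diff: "a_module sA sV act \<Longrightarrow> act a (u - v) = act a u - act a v"
  using a_module_act_add[of sA sV act a "u - v" v] by (simp add: algebra_simps)

lemma
  assumes "mod_hom sV aV sW aW h"
  shows mod_hom_linear: "Vector_Spaces.linear sV sW h"
    and mod_hom_act: "h (aV a v) = aW a (h v)"
    and mod_hom_add: "h (u + v) = h u + h v"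
    and mod_hom_scale: "h (sV c v) = sW c (h v)"
  using assms unfolding mod_hom_def Vector_Spaces.linear_iff by blast+

lemma mod_hom_zero: "mod_hom sV aV sW aW h \<Longrightarrow> h 0 = 0"
  using mod_hom_add[of sV aV sW aW h 0 0] by simp

lemma mod_hom_diff: "mod_hom sV aV sW aW h \<Longrightarrow> h (u - v) = h u - h v"
  using mod_hom_add[of sV aV sW aW h "u - v" v] by (simp add: algebra_simps)

lemma mod_hom_comp:
  "mod_hom sV aV sW aW h \<Longrightarrow> mod_hom sW aW sU aU k \<Longrightarrow> mod_hom sV aV sU aU (\<lambda>v. k (h v))"
  unfolding mod_hom_def Vector_Spaces.linear_iff by auto

lemma mod_hom_id: "a_module sA sV aV \<Longrightarrow> mod_hom sV aV sV aV (\<lambda>v. v)"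
  unfolding mod_hom_def Vector_Spaces.linear_iff using a_module_vector_space by blast

lemma mod_hom_diff_fun:
  assumes "mod_hom sV aV sW aW h" "mod_hom sV aV sW aW k" "a_module sA sW aW"
  shows "mod_hom sV aV sW aW (\<lambda>v. h v - k v)"
proof -
  interpret W: vector_space sW
    by (rule a_module_vector_space[OF assms(3)])
  show ?thesis
    using assms(1,2) a_module_act_diff[OF assms(3)]
    unfolding mod_hom_def Vector_Spaces.linear_iff by (simp add: W.scale_right_diff_distrib)
qed

lemma mod_hom_inv_into_comp:
  assumes f: "mod_hom sM aM sX aX f" "inj f" and l: "mod_hom sZ aZ sX aX l"
    and range: "\<And>z. l z \<in> range f"
    and "vector_space sZ" "vector_space sM"
  shows "mod_hom sZ aZ sM aM (\<lambda>z. inv f (l z))" "\<And>z. f (inv f (l z)) = l z"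
proof -
  show f_inv: "f (inv f (l z)) = l z" for z
    using range by (simp add: f_inv_into_f)
  have "f (inv f (l (u + v))) = f (inv f (l u) + inv f (l v))" for u v
    unfolding f_inv mod_hom_add[OF f(1)] by (rule mod_hom_add[OF l])
  moreover have "f (inv f (l (sZ c u))) = f (sM c (inv f (l u)))" for c u
    unfolding f_inv mod_hom_scale[OF f(1)] by (rule mod_hom_scale[OF l])
  moreover have "f (inv f (l (aZ a u))) = f (aM a (inv f (l u)))" for a u
    unfolding f_inv mod_hom_act[OF f(1)] by (rule mod_hom_act[OF l])
  ultimately show "mod_hom sZ aZ sM aM (\<lambda>z. inv f (l z))"
    using assms(5,6) injD[OF f(2)] unfolding mod_hom_def Vector_Spaces.linear_iff by blast
qed

abbreviation (input) fun_scale :: "('k \<Rightarrow> 'w \<Rightarrow> 'w) \<Rightarrow> 'k \<Rightarrow> ('v \<Rightarrow> 'w) \<Rightarrow> 'v \<Rightarrow> 'w" where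
  "fun_scale s \<equiv> \<lambda>c f v. s c (f v)"

lemma vector_space_fun_scale:
  assumes "vector_space s"
  shows "vector_space (fun_scale s)"
proof -
  interpret vector_space s by fact
  show ?thesis
    by unfold_locales (auto simp: fun_eq_iff scale_right_distrib scale_left_distrib)
qed

lemma vector_space_pair_fun_scale:
  "vector_space s1 \<Longrightarrow> vector_space s2 \<Longrightarrow> vector_space_pair (fun_scale s1) (fun_scale s2)"
  by (simp add: vector_space_pair_def vector_space_fun_scale)

lemma linear_postcomp:
  assumes "vector_space sV" "vector_space sW" "Vector_Spaces.linear sV sW g"
  shows "Vector_Spaces.linear (fun_scale sV) (fun_scale sW) (\<lambda>l (z::'z). g (l z))"
  using assms unfolding Vector_Spaces.linear_iff
  by (auto simp: fun_eq_iff intro: vector_space_fun_scale)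

lemma linear_precomp:
  assumes "vector_space sV"
  shows "Vector_Spaces.linear (fun_scale sV) (fun_scale sV) (\<lambda>h (z::'z). h (f z))"
  unfolding Vector_Spaces.linear_iff
  by (auto simp: fun_eq_iff intro: vector_space_fun_scale[OF assms])

lemma sum_fun_apply: "(\<Sum>i\<in>I. f i) x = (\<Sum>i\<in>I. f i x)"
  by (induction I rule: infinite_finite_induct) auto

lemma (in vector_space) linear_eq_sum_representation:
  assumes "Vector_Spaces.linear scale sW h" "independent B" "finite B" "span B = UNIV"
  shows "h v = (\<Sum>b\<in>B. sW (representation B v b) (h b))"
proof -
  interpret h: Vector_Spaces.linear scale sW h
    by fact
  have eq: "(\<Sum>b\<in>B. scale (representation B v b) b) = v"
    using sum_representation_eq[OF assms(2) _ assms(3)] assms(4) by auto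
  have "h v = h (\<Sum>b\<in>B. scale (representation B v b) b)"
    by (simp only: eq)
  also have "\<dots> = (\<Sum>b\<in>B. sW (representation B v b) (h b))"
    by (simp add: h.sum h.scale)
  finally show ?thesis .
qed

text \<open>By \<open>linear_eq_sum_representation\<close> every linear map is a sum of the rank-one maps
  \<open>v \<mapsto> (b-coordinate of v) \<cdot> w\<close>, \<open>b\<close> in a finite basis of the source, and these lie in the
  span of the finitely many such maps with \<open>w\<close> in a finite spanning set of the target.\<close>
lemma linear_maps_finite_span:
  fixes sV :: "'k::field \<Rightarrow> 'v::ab_group_add \<Rightarrow> 'v" and sW :: "'k \<Rightarrow> 'w::ab_group_add \<Rightarrow> 'w"
  assumes V: "vector_space sV" "fin_dim sV" and W: "vector_space sW" "fin_dim sW"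
  obtains F where "finite F" "{h. Vector_Spaces.linear sV sW h} \<subseteq> module.span (fun_scale sW) F"
proof -
  interpret V: vector_space sV by fact
  interpret W: vector_space sW by fact
  interpret FS: vector_space "fun_scale sW :: 'k \<Rightarrow> ('v \<Rightarrow> 'w) \<Rightarrow> 'v \<Rightarrow> 'w"
    by (rule vector_space_fun_scale[OF W(1)])
  obtain B where B: "finite B" "V.span B = UNIV"
    using V(2) unfolding fin_dim_def by auto
  obtain C where C: "finite C" "W.span C = UNIV"
    using W(2) unfolding fin_dim_def by auto
  obtain B0 where B0: "B0 \<subseteq> B" "V.independent B0" "B \<subseteq> V.span B0"
    by (rule V.maximal_independent_subset)
  have span_B0: "V.span B0 = UNIV"
    using V.span_mono[OF B0(3)] B(2) V.span_span by auto
  have "finite B0"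
    using B0(1) B(1) finite_subset by auto
  define E where "E b w = (\<lambda>v. sW (V.representation B0 v b) w)" for b w
  define F where "F = (\<lambda>(b, w). E b w) ` (B0 \<times> C)"
  have E_span: "E b w \<in> FS.span F" if "b \<in> B0" for b w
  proof -
    interpret E: Vector_Spaces.linear sW "fun_scale sW" "E b"
      unfolding Vector_Spaces.linear_iff using W(1) FS.vector_space_axioms E_def
      by (auto simp: fun_eq_iff W.scale_right_distrib)
    have "E b w \<in> E b ` W.span C"
      using C(2) by auto
    also have "\<dots> = FS.span (E b ` C)"
      using E.span_image by simp
    also have "\<dots> \<subseteq> FS.span F"
      by (rule FS.span_mono) (auto simp: F_def that)
    finally show ?thesis .
  qed
  have "h \<in> FS.span F" if h: "Vector_Spaces.linear sV sW h" for h
  proof -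
    have "h v = (\<Sum>b\<in>B0. E b (h b)) v" for v
      unfolding sum_fun_apply E_def
      by (rule V.linear_eq_sum_representation[OF h B0(2) \<open>finite B0\<close> span_B0])
    then have "h = (\<Sum>b\<in>B0. E b (h b))"
      by (rule ext)
    also have "\<dots> \<in> FS.span F"
      by (rule FS.span_sum) (use E_span in auto)
    finally show ?thesis .
  qed
  moreover have "finite F"
    unfolding F_def using \<open>finite B0\<close> C(1) by simp
  ultimately show ?thesis
    using that[of F] by blast
qed

lemma hom_set_linear: "h \<in> hom_set sV aV sW aW \<Longrightarrow> Vector_Spaces.linear sV sW h"
  unfolding hom_set_def mod_hom_def by auto

lemma hom_set_finite_span:
  assumes "a_module sA sV aV" "a_module sA sW aW" "fin_dim sV" "fin_dim sW"
  obtains F where "finite F" "hom_set sV aV sW aW \<subseteq> module.span (fun_scale sW) F"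
proof -
  obtain F where "finite F" "{h. Vector_Spaces.linear sV sW h} \<subseteq> module.span (fun_scale sW) F"
    by (rule linear_maps_finite_span[OF a_module_vector_space[OF assms(1)] assms(3)
          a_module_vector_space[OF assms(2)] assms(4)])
  moreover have "hom_set sV aV sW aW \<subseteq> {h. Vector_Spaces.linear sV sW h}"
    using hom_set_linear by blast
  ultimately show ?thesis
    using that by blast
qed

lemma hom_set_subspace:
  fixes sV :: "'k::field \<Rightarrow> 'v::ab_group_add \<Rightarrow> 'v" and sW :: "'k \<Rightarrow> 'w::ab_group_add \<Rightarrow> 'w"
  assumes V: "a_module sA sV aV" and W: "a_module sA sW aW"
  shows "module.subspace (fun_scale sW) (hom_set sV aV sW aW)"
proof -
  interpret V: vector_space sV
    by (rule a_module_vector_space[OF V])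
  interpret W: vector_space sW
    by (rule a_module_vector_space[OF W])
  interpret FS: vector_space "fun_scale sW :: 'k \<Rightarrow> ('v \<Rightarrow> 'w) \<Rightarrow> 'v \<Rightarrow> 'w"
    by (rule vector_space_fun_scale) unfold_locales
  have "0 \<in> hom_set sV aV sW aW"
    unfolding hom_set_def mod_hom_def Vector_Spaces.linear_iff
    using V.vector_space_axioms W.vector_space_axioms a_module_act_zero[OF W] by simp
  moreover have "h + k \<in> hom_set sV aV sW aW"
    if "h \<in> hom_set sV aV sW aW" "k \<in> hom_set sV aV sW aW" for h k
    using that a_module_act_add[OF W] unfolding hom_set_def mod_hom_def Vector_Spaces.linear_iff
    by (auto simp: W.scale_right_distrib)
  moreover have "(\<lambda>v. sW c (h v)) \<in> hom_set sV aV sW aW" if "h \<in> hom_set sV aV sW aW" for c h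
    using that a_module_act_scale[OF W] unfolding hom_set_def mod_hom_def Vector_Spaces.linear_iff
    by (auto simp: W.scale_right_distrib W.scale_left_commute)
  ultimately show ?thesis
    unfolding FS.subspace_def by blast
qed

section \<open>Short exact sequences\<close>

lemma
  assumes "ses sM aM sX aX sN aN f g"
  shows ses_mod_hom_inj: "mod_hom sM aM sX aX f"
    and ses_mod_hom_surj: "mod_hom sX aX sN aN g"
    and ses_inj: "inj f"
    and ses_surj: "surj g"
    and ses_kernel_eq_range: "g x = 0 \<longleftrightarrow> x \<in> range f"
  using assms unfolding ses_def by auto

lemma ses_comp_eq_0: "ses sM aM sX aX sN aN f g \<Longrightarrow> g (f m) = 0"
  using ses_kernel_eq_range by blast

lemma ses_linear_section:
  assumes "ses sM aM sX aX sN aN f g" "vector_space sX" "vector_space sN"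
  obtains \<sigma> where "Vector_Spaces.linear sN sX \<sigma>" "\<And>n. g (\<sigma> n) = n"
proof -
  interpret vector_space_pair sX sN
    using assms(2,3) by (simp add: vector_space_pair_def)
  obtain \<sigma> where "Vector_Spaces.linear sN sX \<sigma>" "g \<circ> \<sigma> = id"
    using linear_surjective_right_inverse[OF mod_hom_linear[OF ses_mod_hom_surj[OF assms(1)]]
        ses_surj[OF assms(1)]] by blast
  then show ?thesis
    using that by (auto simp: fun_eq_iff)
qed

lemma ses_factor_through_surj:
  assumes s: "ses sM aM sX aX sN aN f g" and X: "a_module sA sX aX" and N: "a_module sA sN aN"
    and h: "mod_hom sX aX sZ aZ h" and hf: "\<And>m. h (f m) = 0"
  obtains k where "mod_hom sN aN sZ aZ k" "\<And>x. h x = k (g x)"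
proof -
  obtain \<sigma> where \<sigma>: "Vector_Spaces.linear sN sX \<sigma>" "\<And>n. g (\<sigma> n) = n"
    using ses_linear_section[OF s a_module_vector_space[OF X] a_module_vector_space[OF N]] by blast
  have h_eq: "h u = h v" if "g u = g v" for u v
  proof -
    have "g (u - v) = 0"
      using that mod_hom_diff[OF ses_mod_hom_surj[OF s]] by simp
    then obtain m where "u - v = f m"
      using ses_kernel_eq_range[OF s] by auto
    then show ?thesis
      using hf[of m] mod_hom_diff[OF h, of u v] by simp
  qed
  have "h (\<sigma> (aN a n)) = aZ a (h (\<sigma> n))" for a n
    using h_eq[of "\<sigma> (aN a n)" "aX a (\<sigma> n)"] \<sigma>(2) mod_hom_act[OF ses_mod_hom_surj[OF s]]
      mod_hom_act[OF h] by simp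
  then have "mod_hom sN aN sZ aZ (\<lambda>n. h (\<sigma> n))"
    using Vector_Spaces.linear_compose[OF \<sigma>(1) mod_hom_linear[OF h]]
    unfolding mod_hom_def comp_def by blast
  moreover have "h x = h (\<sigma> (g x))" for x
    by (rule h_eq) (simp add: \<sigma>(2))
  ultimately show ?thesis
    using that by blast
qed

lemma ses_retraction_of_splits:
  assumes s: "ses sM aM sX aX sN aN f g" and X: "a_module sA sX aX" and M: "a_module sA sM aM"
    and split: "ses_splits sM aM sX aX sN aN f g"
  obtains \<rho> where "mod_hom sX aX sM aM \<rho>" "\<And>m. \<rho> (f m) = m"
proof -
  obtain t where t: "mod_hom sN aN sX aX t" "\<And>n. g (t n) = n"
    using split unfolding ses_splits_def by blast
  have h: "mod_hom sX aX sX aX (\<lambda>u. u - t (g u))"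
    by (rule mod_hom_diff_fun[OF mod_hom_id[OF X] mod_hom_comp[OF ses_mod_hom_surj[OF s] t(1)] X])
  have "g (u - t (g u)) = 0" for u
    using mod_hom_diff[OF ses_mod_hom_surj[OF s]] t(2) by simp
  then have "u - t (g u) \<in> range f" for u
    using ses_kernel_eq_range[OF s] by blast
  note \<rho> = mod_hom_inv_into_comp[OF ses_mod_hom_inj[OF s] ses_inj[OF s] h this
      a_module_vector_space[OF X] a_module_vector_space[OF M]]
  have "inv f (f m - t (g (f m))) = m" for m
    using ses_comp_eq_0[OF s] mod_hom_zero[OF t(1)] ses_inj[OF s] by simp
  then show ?thesis
    using that[OF \<rho>(1)] by blast
qed

lemma ses_splits_of_retraction:
  assumes s: "ses sM aM sX aX sN aN f g" and X: "a_module sA sX aX" and N: "a_module sA sN aN"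
    and \<rho>: "mod_hom sX aX sM aM \<rho>" "\<And>m. \<rho> (f m) = m"
  shows "ses_splits sM aM sX aX sN aN f g"
proof -
  have h: "mod_hom sX aX sX aX (\<lambda>x. x - f (\<rho> x))"
    by (rule mod_hom_diff_fun[OF mod_hom_id[OF X] mod_hom_comp[OF \<rho>(1) ses_mod_hom_inj[OF s]] X])
  have "f m - f (\<rho> (f m)) = 0" for m
    using \<rho>(2) by simp
  then obtain k where k: "mod_hom sN aN sX aX k" "\<And>x. x - f (\<rho> x) = k (g x)"
    using ses_factor_through_surj[OF s X N h] by blast
  have "g (k n) = n" for n
  proof -
    obtain x where "n = g x"
      using ses_surj[OF s] by blast
    then show ?thesis
      using k(2)[of x, symmetric] mod_hom_diff[OF ses_mod_hom_surj[OF s]] ses_comp_eq_0[OF s]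
      by simp
  qed
  then show ?thesis
    unfolding ses_splits_def using k(1) by blast
qed

lemma hom_set_postcomp_kernel:
  assumes s: "ses sM aM sX aX sN aN f g" and Z: "a_module sA sZ aZ" and M: "a_module sA sM aM"
  shows "hom_set sZ aZ sX aX \<inter> {l. (\<lambda>z. g (l z)) = 0} = (\<lambda>k z. f (k z)) ` hom_set sZ aZ sM aM"
proof
  show "(\<lambda>k z. f (k z)) ` hom_set sZ aZ sM aM \<subseteq> hom_set sZ aZ sX aX \<inter> {l. (\<lambda>z. g (l z)) = 0}"
    using mod_hom_comp[OF _ ses_mod_hom_inj[OF s]] ses_comp_eq_0[OF s]
    unfolding hom_set_def by (auto simp: fun_eq_iff)
next
  show "hom_set sZ aZ sX aX \<inter> {l. (\<lambda>z. g (l z)) = 0} \<subseteq> (\<lambda>k z. f (k z)) ` hom_set sZ aZ sM aM"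
  proof
    fix l
    assume l: "l \<in> hom_set sZ aZ sX aX \<inter> {l. (\<lambda>z. g (l z)) = 0}"
    then have "mod_hom sZ aZ sX aX l" "l z \<in> range f" for z
      using ses_kernel_eq_range[OF s] unfolding hom_set_def by (auto simp: fun_eq_iff)
    note k = mod_hom_inv_into_comp[OF ses_mod_hom_inj[OF s] ses_inj[OF s] this
        a_module_vector_space[OF Z] a_module_vector_space[OF M]]
    show "l \<in> (\<lambda>k z. f (k z)) ` hom_set sZ aZ sM aM"
      using k unfolding hom_set_def by (intro image_eqI[of _ _ "\<lambda>z. inv f (l z)"]) auto
  qed
qed

lemma hom_set_precomp_kernel:
  assumes s: "ses sM aM sX aX sN aN f g" and X: "a_module sA sX aX" and N: "a_module sA sN aN"
  shows "hom_set sX aX sZ aZ \<inter> {h. (\<lambda>m. h (f m)) = 0} = (\<lambda>k x. k (g x)) ` hom_set sN aN sZ aZ"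
proof
  show "(\<lambda>k x. k (g x)) ` hom_set sN aN sZ aZ \<subseteq> hom_set sX aX sZ aZ \<inter> {h. (\<lambda>m. h (f m)) = 0}"
    using mod_hom_comp[OF ses_mod_hom_surj[OF s]] ses_comp_eq_0[OF s] mod_hom_zero
    unfolding hom_set_def by (auto simp: fun_eq_iff)
next
  show "hom_set sX aX sZ aZ \<inter> {h. (\<lambda>m. h (f m)) = 0} \<subseteq> (\<lambda>k x. k (g x)) ` hom_set sN aN sZ aZ"
  proof
    fix h
    assume "h \<in> hom_set sX aX sZ aZ \<inter> {h. (\<lambda>m. h (f m)) = 0}"
    then have "mod_hom sX aX sZ aZ h" "\<And>m. h (f m) = 0"
      unfolding hom_set_def by (auto simp: fun_eq_iff)
    then obtain k where "mod_hom sN aN sZ aZ k" "\<And>x. h x = k (g x)"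
      using ses_factor_through_surj[OF s X N] by metis
    then show "h \<in> (\<lambda>k x. k (g x)) ` hom_set sN aN sZ aZ"
      unfolding hom_set_def by (intro image_eqI[of _ _ k]) (auto simp: fun_eq_iff)
  qed
qed

lemma dim_hom_postcomp:
  fixes sZ :: "'k::field \<Rightarrow> 'z::ab_group_add \<Rightarrow> 'z" and sM :: "'k \<Rightarrow> 'm::ab_group_add \<Rightarrow> 'm"
    and sX :: "'k \<Rightarrow> 'x::ab_group_add \<Rightarrow> 'x" and sN :: "'k \<Rightarrow> 'n::ab_group_add \<Rightarrow> 'n"
  assumes Z: "a_module sA sZ aZ" "fin_dim sZ" and M: "a_module sA sM aM" "fin_dim sM"
    and X: "a_module sA sX aX" "fin_dim sX" and N: "a_module sA sN aN"
    and s: "ses sM aM sX aX sN aN f g"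
  shows "dim_hom sZ aZ sX aX = dim_hom sZ aZ sM aM
           + vector_space.dim (fun_scale sN) ((\<lambda>l z. g (l z)) ` hom_set sZ aZ sX aX)"
proof -
  interpret XN: vector_space_pair "fun_scale sX :: _ \<Rightarrow> ('z \<Rightarrow> 'x) \<Rightarrow> _" "fun_scale sN"
    by (rule vector_space_pair_fun_scale[OF a_module_vector_space[OF X(1)]
          a_module_vector_space[OF N]])
  interpret MX: vector_space_pair "fun_scale sM :: _ \<Rightarrow> ('z \<Rightarrow> 'm) \<Rightarrow> _" "fun_scale sX"
    by (rule vector_space_pair_fun_scale[OF a_module_vector_space[OF M(1)]
          a_module_vector_space[OF X(1)]])
  obtain F where F: "finite F" "hom_set sZ aZ sX aX \<subseteq> XN.vs1.span F"
    by (rule hom_set_finite_span[OF Z(1) X(1) Z(2) X(2)])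
  obtain F' where F': "finite F'" "hom_set sZ aZ sM aM \<subseteq> MX.vs1.span F'"
    by (rule hom_set_finite_span[OF Z(1) M(1) Z(2) M(2)])
  have "inj_on (\<lambda>k z. f (k z)) (hom_set sZ aZ sM aM)"
    using ses_inj[OF s] by (auto simp: inj_on_def fun_eq_iff dest: injD)
  then have "XN.vs1.dim ((\<lambda>k z. f (k z)) ` hom_set sZ aZ sM aM) = MX.vs1.dim (hom_set sZ aZ sM aM)"
    by (rule MX.dim_image_eq_inj_on[OF linear_postcomp[OF a_module_vector_space[OF M(1)]
          a_module_vector_space[OF X(1)] mod_hom_linear[OF ses_mod_hom_inj[OF s]]]
          F' hom_set_subspace[OF Z(1) M(1)]])
  then show ?thesis
    using XN.rank_nullity[OF linear_postcomp[OF a_module_vector_space[OF X(1)]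
          a_module_vector_space[OF N] mod_hom_linear[OF ses_mod_hom_surj[OF s]]]
        F hom_set_subspace[OF Z(1) X(1)]]
    unfolding dim_hom_def hom_set_postcomp_kernel[OF s Z(1) M(1)] by simp
qed

lemma dim_hom_precomp:
  fixes sZ :: "'k::field \<Rightarrow> 'z::ab_group_add \<Rightarrow> 'z" and sM :: "'k \<Rightarrow> 'm::ab_group_add \<Rightarrow> 'm"
    and sX :: "'k \<Rightarrow> 'x::ab_group_add \<Rightarrow> 'x" and sN :: "'k \<Rightarrow> 'n::ab_group_add \<Rightarrow> 'n"
  assumes Z: "a_module sA sZ aZ" "fin_dim sZ" and N: "a_module sA sN aN" "fin_dim sN"
    and X: "a_module sA sX aX" "fin_dim sX"
    and s: "ses sM aM sX aX sN aN f g"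
  shows "dim_hom sX aX sZ aZ = dim_hom sN aN sZ aZ
           + vector_space.dim (fun_scale sZ) ((\<lambda>h m. h (f m)) ` hom_set sX aX sZ aZ)"
proof -
  interpret XM: vector_space_pair "fun_scale sZ :: _ \<Rightarrow> ('x \<Rightarrow> 'z) \<Rightarrow> _"
      "fun_scale sZ :: _ \<Rightarrow> ('m \<Rightarrow> 'z) \<Rightarrow> _"
    by (rule vector_space_pair_fun_scale[OF a_module_vector_space[OF Z(1)]
          a_module_vector_space[OF Z(1)]])
  interpret NX: vector_space_pair "fun_scale sZ :: _ \<Rightarrow> ('n \<Rightarrow> 'z) \<Rightarrow> _"
      "fun_scale sZ :: _ \<Rightarrow> ('x \<Rightarrow> 'z) \<Rightarrow> _"
    by (rule vector_space_pair_fun_scale[OF a_module_vector_space[OF Z(1)]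
          a_module_vector_space[OF Z(1)]])
  obtain F where F: "finite F" "hom_set sX aX sZ aZ \<subseteq> XM.vs1.span F"
    by (rule hom_set_finite_span[OF X(1) Z(1) X(2) Z(2)])
  obtain F' where F': "finite F'" "hom_set sN aN sZ aZ \<subseteq> NX.vs1.span F'"
    by (rule hom_set_finite_span[OF N(1) Z(1) N(2) Z(2)])
  have "inj_on (\<lambda>k x. k (g x)) (hom_set sN aN sZ aZ)"
    using ses_surj[OF s] by (auto simp: inj_on_def fun_eq_iff) (metis surjD)
  then have "XM.vs1.dim ((\<lambda>k x. k (g x)) ` hom_set sN aN sZ aZ) = NX.vs1.dim (hom_set sN aN sZ aZ)"
    by (rule NX.dim_image_eq_inj_on[OF linear_precomp[OF a_module_vector_space[OF Z(1)]]
          F' hom_set_subspace[OF N(1) Z(1)]])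
  then show ?thesis
    using XM.rank_nullity[OF linear_precomp[OF a_module_vector_space[OF Z(1)], of f]
        F hom_set_subspace[OF X(1) Z(1)]]
    unfolding dim_hom_def hom_set_precomp_kernel[OF s X(1) N(1)] by simp
qed

section \<open>Lifting homomorphisms through extensions\<close>

definition prod_scale :: "('k \<Rightarrow> 'v \<Rightarrow> 'v) \<Rightarrow> ('k \<Rightarrow> 'w \<Rightarrow> 'w) \<Rightarrow> 'k \<Rightarrow> 'v \<times> 'w \<Rightarrow> 'v \<times> 'w" where
  "prod_scale sV sW = (\<lambda>c p. (sV c (fst p), sW c (snd p)))"

definition prod_act :: "('a \<Rightarrow> 'v \<Rightarrow> 'v) \<Rightarrow> ('a \<Rightarrow> 'w \<Rightarrow> 'w) \<Rightarrow> 'a \<Rightarrow> 'v \<times> 'w \<Rightarrow> 'v \<times> 'w" where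
  "prod_act aV aW = (\<lambda>r p. (aV r (fst p), aW r (snd p)))"

lemma a_module_prod:
  assumes V: "a_module sA sV aV" and W: "a_module sA sW aW"
  shows "a_module sA (prod_scale sV sW) (prod_act aV aW)"
proof -
  interpret V: vector_space sV
    by (rule a_module_vector_space[OF V])
  interpret W: vector_space sW
    by (rule a_module_vector_space[OF W])
  have "vector_space (prod_scale sV sW)"
    by unfold_locales (auto simp: prod_scale_def V.scale_right_distrib V.scale_left_distrib
        W.scale_right_distrib W.scale_left_distrib)
  then show ?thesis
    unfolding a_module_def
    by (auto simp: prod_scale_def prod_act_def a_module_act_add[OF V] a_module_act_add[OF W]
        a_module_act_add_left[OF V] a_module_act_add_left[OF W] a_module_act_one[OF V]
        a_module_act_one[OF W] a_module_act_mult[OF V] a_module_act_mult[OF W]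
        a_module_act_alg_scale[OF V] a_module_act_alg_scale[OF W]
        a_module_act_scale[OF V] a_module_act_scale[OF W])
qed

lemma a_module_transport:
  fixes \<phi> :: "'e::ab_group_add \<Rightarrow> 'p::ab_group_add"
  assumes P: "a_module sA sP aP" and inj: "inj \<phi>"
    and add: "\<And>v w. \<phi> (v + w) = \<phi> v + \<phi> w"
    and scale: "\<And>c v. \<phi> (sE c v) = sP c (\<phi> v)"
    and act: "\<And>r v. \<phi> (aE r v) = aP r (\<phi> v)"
  shows "a_module sA sE aE"
proof -
  interpret P: vector_space sP
    by (rule a_module_vector_space[OF P])
  note eq = injD[OF inj]
  show ?thesis
    unfolding a_module_def
  proof (intro conjI allI)
    show "vector_space sE"
      by unfold_locales (rule eq; simp add: add scale P.scale_right_distrib P.scale_left_distrib)+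
  qed (rule eq; simp add: add scale act a_module_act_add[OF P] a_module_act_add_left[OF P]
      a_module_act_one[OF P] a_module_act_mult[OF P] a_module_act_alg_scale[OF P]
      a_module_act_scale[OF P])+
qed

text \<open>The pullback of \<open>0 \<rightarrow> M \<rightarrow> X \<rightarrow> N \<rightarrow> 0\<close> along \<open>h : P \<rightarrow> N\<close> is the submodule
  \<open>{(x, p). g x = h p}\<close> of \<open>X \<times> P\<close>; a \<open>K\<close>-linear section \<open>\<sigma>\<close> of \<open>g\<close> identifies it
  \<open>K\<close>-linearly with \<open>M \<times> P\<close> via \<open>\<phi>\<close>, and we transport the \<open>A\<close>-action along \<open>\<phi>\<close>.\<close>
lemma pullback_module:
  assumes X: "a_module sA sX aX" and P: "a_module sA sP aP"
    and s: "ses sM aM sX aX sN aN f g" and h: "mod_hom sP aP sN aN h"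
    and \<sigma>: "Vector_Spaces.linear sN sX \<sigma>" "\<And>n. g (\<sigma> n) = n"
  defines "\<phi> \<equiv> \<lambda>v. (f (fst v) + \<sigma> (h (snd v)), snd v)"
  obtains aE where "a_module sA (prod_scale sM sP) aE"
    and "\<And>r v. \<phi> (aE r v) = prod_act aX aP r (\<phi> v)"
proof -
  interpret X: vector_space sX
    by (rule a_module_vector_space[OF X])
  interpret \<sigma>: Vector_Spaces.linear sN sX \<sigma>
    by (rule \<sigma>(1))
  note f = ses_mod_hom_inj[OF s] and g = ses_mod_hom_surj[OF s]
  define \<psi> where "\<psi> w = (inv f (fst w - \<sigma> (h (snd w))), snd w)" for w
  define aE where "aE r v = \<psi> (prod_act aX aP r (\<phi> v))" for r v
  have \<phi>_\<psi>: "\<phi> (\<psi> w) = w" if "g (fst w) = h (snd w)" for w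
  proof -
    have "g (fst w - \<sigma> (h (snd w))) = 0"
      using that mod_hom_diff[OF g] \<sigma>(2) by simp
    then have "f (inv f (fst w - \<sigma> (h (snd w)))) = fst w - \<sigma> (h (snd w))"
      using ses_kernel_eq_range[OF s] by (blast intro: f_inv_into_f)
    then show ?thesis
      unfolding \<phi>_def \<psi>_def by (simp add: prod_eq_iff)
  qed
  have "g (fst (\<phi> v)) = h (snd (\<phi> v))" for v
    unfolding \<phi>_def using mod_hom_add[OF g] ses_comp_eq_0[OF s] \<sigma>(2) by simp
  then have "g (fst (prod_act aX aP r (\<phi> v))) = h (snd (prod_act aX aP r (\<phi> v)))" for r v
    unfolding prod_act_def using mod_hom_act[OF g] mod_hom_act[OF h] by simp
  then have act: "\<phi> (aE r v) = prod_act aX aP r (\<phi> v)" for r v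
    unfolding aE_def by (rule \<phi>_\<psi>)
  have "inj \<phi>"
    using ses_inj[OF s] unfolding \<phi>_def by (auto intro!: injI simp: prod_eq_iff dest: injD)
  moreover have "\<phi> (v + w) = \<phi> v + \<phi> w" for v w
    unfolding \<phi>_def
    by (simp add: mod_hom_add[OF f] mod_hom_add[OF h] \<sigma>.add algebra_simps)
  moreover have "\<phi> (prod_scale sM sP c v) = prod_scale sX sP c (\<phi> v)" for c v
    unfolding \<phi>_def prod_scale_def
    by (simp add: mod_hom_scale[OF f] mod_hom_scale[OF h] \<sigma>.scale X.scale_right_distrib)
  ultimately have "a_module sA (prod_scale sM sP) aE"
    using a_module_transport[OF a_module_prod[OF X P]] act by blast
  then show ?thesis
    using that act by blast
qed

lemma pullback_extension:
  assumes X: "a_module sA sX aX" and M: "a_module sA sM aM" and P: "a_module sA sP aP"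
    and s: "ses sM aM sX aX sN aN f g" and h: "mod_hom sP aP sN aN h"
    and \<sigma>: "Vector_Spaces.linear sN sX \<sigma>" "\<And>n. g (\<sigma> n) = n"
  obtains aE where "a_module sA (prod_scale sM sP) aE"
    and "mod_hom sM aM (prod_scale sM sP) aE (\<lambda>m. (m, 0))"
    and "mod_hom (prod_scale sM sP) aE sP aP snd"
    and "mod_hom (prod_scale sM sP) aE sX aX (\<lambda>v. f (fst v) + \<sigma> (h (snd v)))"
proof -
  interpret \<sigma>: Vector_Spaces.linear sN sX \<sigma>
    by (rule \<sigma>(1))
  interpret M: vector_space sM
    by (rule a_module_vector_space[OF M])
  interpret P: vector_space sP
    by (rule a_module_vector_space[OF P])
  note f = ses_mod_hom_inj[OF s]
  define \<phi> where "\<phi> v = (f (fst v) + \<sigma> (h (snd v)), snd v)" for v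
  obtain aE where E: "a_module sA (prod_scale sM sP) aE"
    and act: "\<And>r v. \<phi> (aE r v) = prod_act aX aP r (\<phi> v)"
    using pullback_module[OF X P s h \<sigma>] unfolding \<phi>_def by metis
  interpret E: vector_space "prod_scale sM sP"
    by (rule a_module_vector_space[OF E])
  have fst_act: "f (fst (aE r v)) + \<sigma> (h (snd (aE r v))) = aX r (f (fst v) + \<sigma> (h (snd v)))"
    and snd_act: "snd (aE r v) = aP r (snd v)" for r v
    using arg_cong[where f=fst, OF act[of r v]] arg_cong[where f=snd, OF act[of r v]]
    by (simp_all add: prod_act_def \<phi>_def)
  have "aE r (m, 0) = (aM r m, 0)" for r m
  proof -
    have "snd (aE r (m, 0)) = 0"
      using snd_act[of r "(m, 0)"] a_module_act_zero[OF P] by simp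
    moreover have "f (fst (aE r (m, 0))) = f (aM r m)"
      using fst_act[of r "(m, 0)"] mod_hom_zero[OF h] \<sigma>.zero mod_hom_act[OF f] calculation
      by simp
    ultimately show ?thesis
      using injD[OF ses_inj[OF s]] by (auto simp: prod_eq_iff)
  qed
  then have "mod_hom sM aM (prod_scale sM sP) aE (\<lambda>m. (m, 0))"
    unfolding mod_hom_def Vector_Spaces.linear_iff
    using M.vector_space_axioms E.vector_space_axioms by (simp add: prod_scale_def)
  moreover have "mod_hom (prod_scale sM sP) aE sP aP snd"
    unfolding mod_hom_def Vector_Spaces.linear_iff
    using E.vector_space_axioms P.vector_space_axioms snd_act by (simp add: prod_scale_def)
  moreover have "mod_hom (prod_scale sM sP) aE sX aX (\<lambda>v. f (fst v) + \<sigma> (h (snd v)))"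
    unfolding mod_hom_def Vector_Spaces.linear_iff
    using E.vector_space_axioms a_module_vector_space[OF X] fst_act
    by (simp add: prod_scale_def mod_hom_add[OF f] mod_hom_add[OF h] mod_hom_scale[OF f]
        mod_hom_scale[OF h] \<sigma>.add \<sigma>.scale \<sigma>.vs2.scale_right_distrib algebra_simps)
  ultimately show ?thesis
    using that E by blast
qed

lemma ses_pair_inclusion_snd:
  assumes "mod_hom sM aM sE aE (\<lambda>m. (m, 0))" "mod_hom sE aE sP aP snd"
  shows "ses sM aM sE aE sP aP (\<lambda>m. (m, 0)) snd"
proof -
  have "range (\<lambda>m. (m, 0)) = {e. snd e = 0}"
    by (auto simp: image_def prod_eq_iff)
  moreover have "surj snd"
    by (metis snd_conv surjI)
  ultimately show ?thesis
    unfolding ses_def using assms by (auto intro: injI)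
qed

lemma hom_lift_of_ext1_self_zero:
  fixes sA :: "'k::field \<Rightarrow> 'a::ring_1 \<Rightarrow> 'a" and sM :: "'k \<Rightarrow> 'm::ab_group_add \<Rightarrow> 'm"
  assumes X: "a_module sA sX aX" and M: "a_module sA sM aM" and N: "a_module sA sN aN"
    and s: "ses sM aM sX aX sN aN f g" and ext: "ext1_self_zero sA sM aM"
    and h: "mod_hom sM aM sN aN h"
  obtains l where "mod_hom sM aM sX aX l" "\<And>m. g (l m) = h m"
proof -
  obtain \<sigma> where \<sigma>: "Vector_Spaces.linear sN sX \<sigma>" "\<And>n. g (\<sigma> n) = n"
    using ses_linear_section[OF s a_module_vector_space[OF X] a_module_vector_space[OF N]] by blast
  obtain aE where E: "a_module sA (prod_scale sM sM) aE"
    and incl: "mod_hom sM aM (prod_scale sM sM) aE (\<lambda>m. (m, 0))"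
    and proj: "mod_hom (prod_scale sM sM) aE sM aM snd"
    and p: "mod_hom (prod_scale sM sM) aE sX aX (\<lambda>v. f (fst v) + \<sigma> (h (snd v)))"
    by (rule pullback_extension[OF X M M s h \<sigma>])
  obtain t where t: "mod_hom sM aM (prod_scale sM sM) aE t" "\<And>m. snd (t m) = m"
    using ext E ses_pair_inclusion_snd[OF incl proj]
    unfolding ext1_self_zero_def ses_splits_def by blast
  have "g (f (fst (t m)) + \<sigma> (h (snd (t m)))) = h m" for m
    using mod_hom_add[OF ses_mod_hom_surj[OF s]] ses_comp_eq_0[OF s] \<sigma>(2) t(2) by simp
  then show ?thesis
    using that[OF mod_hom_comp[OF t(1) p]] by simp
qed

section \<open>Splitting of the two sequences\<close>

lemma hom_set_eq_if_dim_le: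
  fixes sM :: "'k::field \<Rightarrow> 'm::ab_group_add \<Rightarrow> 'm" and sN :: "'k \<Rightarrow> 'n::ab_group_add \<Rightarrow> 'n"
  assumes M: "a_module sA sM aM" "fin_dim sM" and N: "a_module sA sN aN" "fin_dim sN"
    and S: "S \<subseteq> hom_set sM aM sN aN" "module.subspace (fun_scale sN) S"
    and dim: "dim_hom sM aM sN aN \<le> vector_space.dim (fun_scale sN) S"
  shows "S = hom_set sM aM sN aN"
proof -
  interpret FS: vector_space "fun_scale sN :: _ \<Rightarrow> ('m \<Rightarrow> 'n) \<Rightarrow> _"
    by (rule vector_space_fun_scale[OF a_module_vector_space[OF N(1)]])
  obtain F where "finite F" "hom_set sM aM sN aN \<subseteq> FS.span F"
    by (rule hom_set_finite_span[OF M(1) N(1) M(2) N(2)])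
  then show ?thesis
    using FS.subspace_dim_equal_finite_span[OF _ _ S(2) hom_set_subspace[OF M(1) N(1)] S(1)] dim
    unfolding dim_hom_def by blast
qed

lemma hom_set_postcomp_eq_if_ext1_self_zero:
  assumes X: "a_module sA sX aX" and M: "a_module sA sM aM" and N: "a_module sA sN aN"
    and s: "ses sM aM sX aX sN aN f g" and ext: "ext1_self_zero sA sM aM"
  shows "(\<lambda>l m. g (l m)) ` hom_set sM aM sX aX = hom_set sM aM sN aN"
proof
  show "(\<lambda>l m. g (l m)) ` hom_set sM aM sX aX \<subseteq> hom_set sM aM sN aN"
    unfolding hom_set_def using mod_hom_comp[OF _ ses_mod_hom_surj[OF s]] by auto
  show "hom_set sM aM sN aN \<subseteq> (\<lambda>l m. g (l m)) ` hom_set sM aM sX aX"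
  proof
    fix h
    assume "h \<in> hom_set sM aM sN aN"
    then obtain l where "mod_hom sM aM sX aX l" "\<And>m. g (l m) = h m"
      using hom_lift_of_ext1_self_zero[OF X M N s ext] unfolding hom_set_def by blast
    then show "h \<in> (\<lambda>l m. g (l m)) ` hom_set sM aM sX aX"
      unfolding hom_set_def by (intro image_eqI[of _ _ l]) auto
  qed
qed

lemma hom_set_precomp_eq_if_retraction:
  assumes f: "mod_hom sM aM sX aX f" and \<rho>: "mod_hom sX aX sM aM \<rho>" "\<And>m. \<rho> (f m) = m"
  shows "(\<lambda>h m. h (f m)) ` hom_set sX aX sZ aZ = hom_set sM aM sZ aZ"
proof
  show "(\<lambda>h m. h (f m)) ` hom_set sX aX sZ aZ \<subseteq> hom_set sM aM sZ aZ"
    unfolding hom_set_def using mod_hom_comp[OF f] by auto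
  show "hom_set sM aM sZ aZ \<subseteq> (\<lambda>h m. h (f m)) ` hom_set sX aX sZ aZ"
  proof
    fix k
    assume "k \<in> hom_set sM aM sZ aZ"
    then have "(\<lambda>x. k (\<rho> x)) \<in> hom_set sX aX sZ aZ"
      unfolding hom_set_def using mod_hom_comp[OF \<rho>(1)] by auto
    then show "k \<in> (\<lambda>h m. h (f m)) ` hom_set sX aX sZ aZ"
      using \<rho>(2) by (intro image_eqI[of _ _ "\<lambda>x. k (\<rho> x)"]) auto
  qed
qed

lemma ses_splits_if_dim_hom_from_eq:
  fixes s1 :: "'k::field \<Rightarrow> 'x1::ab_group_add \<Rightarrow> 'x1"
  assumes X: "a_module sA sX aX" "fin_dim sX" and M1: "a_module sA s1 a1" "fin_dim s1"
    and M2: "a_module sA s2 a2" "fin_dim s2" and M3: "a_module sA s3 a3"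
    and e1: "ses s2 a2 sX aX s1 a1 f g" and e2: "ses s1 a1 sX aX s3 a3 f' g'"
    and ext: "ext1_self_zero sA s1 a1"
    and dim: "dim_hom s1 a1 s2 a2 = dim_hom s1 a1 s3 a3"
  shows "ses_splits s2 a2 sX aX s1 a1 f g"
proof -
  define H where "H = hom_set s1 a1 sX aX"
  define G where "G = (\<lambda>l z. g (l z)) ` H"
  have "dim_hom s1 a1 s1 a1 \<le> vector_space.dim (fun_scale s1) G"
    using hom_set_postcomp_eq_if_ext1_self_zero[OF X(1) M1(1) M3 e2 ext]
      dim_hom_postcomp[OF M1 M2 X M1(1) e1] dim_hom_postcomp[OF M1 M1 X M3 e2] dim
    unfolding G_def H_def dim_hom_def by simp
  moreover have "G \<subseteq> hom_set s1 a1 s1 a1"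
    unfolding G_def H_def hom_set_def using mod_hom_comp[OF _ ses_mod_hom_surj[OF e1]] by auto
  moreover have "module.subspace (fun_scale s1) G"
    unfolding G_def H_def
    by (rule module_hom.subspace_image[OF linear_postcomp[OF a_module_vector_space[OF X(1)]
          a_module_vector_space[OF M1(1)] mod_hom_linear[OF ses_mod_hom_surj[OF e1]],
          unfolded linear_iff_module_hom] hom_set_subspace[OF M1(1) X(1)]])
  ultimately have "G = hom_set s1 a1 s1 a1"
    by (rule hom_set_eq_if_dim_le[OF M1 M1, rotated -1])
  moreover have "(\<lambda>v. v) \<in> hom_set s1 a1 s1 a1"
    unfolding hom_set_def using mod_hom_id[OF M1(1)] by simp
  ultimately have "(\<lambda>v. v) \<in> G"
    by simp
  then obtain l where l: "(\<lambda>v. v) = (\<lambda>z. g (l z))" "l \<in> H"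
    unfolding G_def by (rule imageE)
  then have "mod_hom s1 a1 sX aX l" "\<And>m. g (l m) = m"
    using fun_cong[OF l(1), symmetric] unfolding H_def hom_set_def by auto
  then show ?thesis
    unfolding ses_splits_def by blast
qed

lemma ses_splits_if_dim_hom_to_eq:
  fixes s1 :: "'k::field \<Rightarrow> 'x1::ab_group_add \<Rightarrow> 'x1"
  assumes X: "a_module sA sX aX" "fin_dim sX" and M1: "a_module sA s1 a1" "fin_dim s1"
    and M2: "a_module sA s2 a2" and M3: "a_module sA s3 a3" "fin_dim s3"
    and e1: "ses s2 a2 sX aX s1 a1 f g" and e2: "ses s1 a1 sX aX s3 a3 f' g'"
    and split: "ses_splits s2 a2 sX aX s1 a1 f g"
    and dim: "dim_hom s2 a2 s1 a1 = dim_hom s3 a3 s1 a1"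
  shows "ses_splits s1 a1 sX aX s3 a3 f' g'"
proof -
  define H where "H = hom_set sX aX s1 a1"
  define G where "G = (\<lambda>h m. h (f' m)) ` H"
  obtain \<rho> where \<rho>: "mod_hom sX aX s2 a2 \<rho>" "\<And>m. \<rho> (f m) = m"
    using ses_retraction_of_splits[OF e1 X(1) M2 split] by blast
  have "dim_hom s1 a1 s1 a1 \<le> vector_space.dim (fun_scale s1) G"
    using hom_set_precomp_eq_if_retraction[OF ses_mod_hom_inj[OF e1] \<rho>, of s1 a1]
      dim_hom_precomp[OF M1 M1 X e1] dim_hom_precomp[OF M1 M3 X e2] dim
    unfolding G_def H_def dim_hom_def by simp
  moreover have "G \<subseteq> hom_set s1 a1 s1 a1"
    unfolding G_def H_def hom_set_def using mod_hom_comp[OF ses_mod_hom_inj[OF e2]] by auto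
  moreover have "module.subspace (fun_scale s1) G"
    unfolding G_def H_def
    by (rule module_hom.subspace_image[OF linear_precomp[OF a_module_vector_space[OF M1(1)],
          unfolded linear_iff_module_hom] hom_set_subspace[OF X(1) M1(1)]])
  ultimately have "G = hom_set s1 a1 s1 a1"
    by (rule hom_set_eq_if_dim_le[OF M1 M1, rotated -1])
  moreover have "(\<lambda>v. v) \<in> hom_set s1 a1 s1 a1"
    unfolding hom_set_def using mod_hom_id[OF M1(1)] by simp
  ultimately have "(\<lambda>v. v) \<in> G"
    by simp
  then obtain r where r: "(\<lambda>v. v) = (\<lambda>m. r (f' m))" "r \<in> H"
    unfolding G_def by (rule imageE)
  then have "mod_hom sX aX s1 a1 r" "\<And>m. r (f' m) = m"
    using fun_cong[OF r(1), symmetric] unfolding H_def hom_set_def by auto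
  then show ?thesis
    by (rule ses_splits_of_retraction[OF e2 X(1) M3(1)])
qed

section \<open>Submodules and internal direct sums\<close>

text \<open>Cancellation is proved for internal direct sums of submodules of a single
  finite-dimensional module, so that all summands live in one type.\<close>

locale fin_dim_module =
  fixes sA :: "'k::field \<Rightarrow> 'a::ring_1 \<Rightarrow> 'a" and sV :: "'k \<Rightarrow> 'v::ab_group_add \<Rightarrow> 'v"
    and aV :: "'a \<Rightarrow> 'v \<Rightarrow> 'v"
  assumes module: "a_module sA sV aV" and fin_dim: "fin_dim sV"
begin

sublocale V: vector_space sV
  by (rule a_module_vector_space[OF module])

lemma finite_spanning_set:
  obtains F where "finite F" "\<And>S. S \<subseteq> V.span F"
  using fin_dim unfolding fin_dim_def by auto

lemma act_add: "aV a (u + v) = aV a u + aV a v"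
  by (rule a_module_act_add[OF module])

lemma act_diff: "aV a (u - v) = aV a u - aV a v"
  by (rule a_module_act_diff[OF module])

lemma act_zero: "aV a 0 = 0"
  by (rule a_module_act_zero[OF module])

lemma scale_eq_act: "sV c v = aV (sA c 1) v"
  using a_module_act_alg_scale[OF module, of c 1 v] a_module_act_one[OF module, of v] by simp

lemma minus_eq_act: "- v = aV (-1) v"
proof -
  have "aV 0 v = 0"
    using a_module_act_add_left[OF module, of 0 0 v] by simp
  then have "v + aV (-1) v = 0"
    using a_module_act_add_left[OF module, of 1 "-1" v] a_module_act_one[OF module] by simp
  then show ?thesis
    using minus_unique[of v "aV (-1) v"] by simp
qed

definition submodule :: "'v set \<Rightarrow> bool" where
  "submodule S \<longleftrightarrow> 0 \<in> S \<and> (\<forall>x\<in>S. \<forall>y\<in>S. x + y \<in> S) \<and> (\<forall>a. \<forall>x\<in>S. aV a x \<in> S)"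

lemma submoduleD:
  assumes "submodule S"
  shows "0 \<in> S" "x \<in> S \<Longrightarrow> y \<in> S \<Longrightarrow> x + y \<in> S" "x \<in> S \<Longrightarrow> aV a x \<in> S"
    and "x \<in> S \<Longrightarrow> - x \<in> S" "x \<in> S \<Longrightarrow> y \<in> S \<Longrightarrow> x - y \<in> S" "x \<in> S \<Longrightarrow> sV c x \<in> S"
proof -
  show "0 \<in> S" "x \<in> S \<Longrightarrow> y \<in> S \<Longrightarrow> x + y \<in> S" "x \<in> S \<Longrightarrow> aV a x \<in> S"
    using assms unfolding submodule_def by auto
  show minus: "x \<in> S \<Longrightarrow> - x \<in> S" for x
    using assms unfolding submodule_def minus_eq_act by auto
  show "x \<in> S \<Longrightarrow> y \<in> S \<Longrightarrow> x - y \<in> S"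
    using minus[of y] assms unfolding submodule_def by (metis diff_conv_add_uminus)
  show "x \<in> S \<Longrightarrow> sV c x \<in> S"
    using assms unfolding submodule_def scale_eq_act by auto
qed

lemma submodule_subspace: "submodule S \<Longrightarrow> V.subspace S"
  by (rule V.subspaceI) (simp_all add: submoduleD)

lemma submodule_Int: "submodule S \<Longrightarrow> submodule T \<Longrightarrow> submodule (S \<inter> T)"
  unfolding submodule_def by auto

definition hom_on :: "'v set \<Rightarrow> 'v set \<Rightarrow> ('v \<Rightarrow> 'v) \<Rightarrow> bool" where
  "hom_on S T \<phi> \<longleftrightarrow> (\<forall>x\<in>S. \<phi> x \<in> T) \<and> (\<forall>x\<in>S. \<forall>y\<in>S. \<phi> (x + y) = \<phi> x + \<phi> y)
     \<and> (\<forall>a. \<forall>x\<in>S. \<phi> (aV a x) = aV a (\<phi> x))"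

lemma hom_onD:
  assumes "hom_on S T \<phi>"
  shows "x \<in> S \<Longrightarrow> \<phi> x \<in> T" "x \<in> S \<Longrightarrow> y \<in> S \<Longrightarrow> \<phi> (x + y) = \<phi> x + \<phi> y"
    and "x \<in> S \<Longrightarrow> \<phi> (aV a x) = aV a (\<phi> x)"
  using assms unfolding hom_on_def by auto

lemma hom_on_zero: "submodule S \<Longrightarrow> hom_on S T \<phi> \<Longrightarrow> \<phi> 0 = 0"
  using hom_onD(2)[of S T \<phi> 0 0] submoduleD(1) by simp

lemma hom_on_diff:
  assumes "submodule S" "hom_on S T \<phi>" "x \<in> S" "y \<in> S"
  shows "\<phi> (x - y) = \<phi> x - \<phi> y"
  using hom_onD(2)[OF assms(2) submoduleD(5)[OF assms(1,3,4)] assms(4)] by (simp add: algebra_simps)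

lemma hom_on_scale: "hom_on S T \<phi> \<Longrightarrow> x \<in> S \<Longrightarrow> \<phi> (sV c x) = sV c (\<phi> x)"
  unfolding scale_eq_act by (rule hom_onD(3))

lemma hom_on_mono: "hom_on S T \<phi> \<Longrightarrow> S' \<subseteq> S \<Longrightarrow> T \<subseteq> T' \<Longrightarrow> hom_on S' T' \<phi>"
  unfolding hom_on_def by blast

lemma hom_on_comp: "hom_on S T \<phi> \<Longrightarrow> hom_on T U \<psi> \<Longrightarrow> hom_on S U (\<lambda>x. \<psi> (\<phi> x))"
  unfolding hom_on_def by auto

lemma hom_on_id: "hom_on S S (\<lambda>x. x)"
  unfolding hom_on_def by auto

lemma hom_on_inv_into:
  assumes S: "submodule S" and \<phi>: "hom_on S T \<phi>" "bij_betw \<phi> S T"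
  shows "hom_on T S (inv_into S \<phi>)"
proof -
  have inj: "inj_on \<phi> S" and image: "\<phi> ` S = T"
    using \<phi>(2) unfolding bij_betw_def by auto
  have inv_in: "inv_into S \<phi> t \<in> S" and inv: "\<phi> (inv_into S \<phi> t) = t" if "t \<in> T" for t
    using that image by (auto intro: inv_into_into f_inv_into_f)
  have "inv_into S \<phi> (x + y) = inv_into S \<phi> x + inv_into S \<phi> y" if "x \<in> T" "y \<in> T" for x y
    using inv_into_f_f[OF inj submoduleD(2)[OF S inv_in[OF that(1)] inv_in[OF that(2)]]]
      hom_onD(2)[OF \<phi>(1) inv_in[OF that(1)] inv_in[OF that(2)]] inv that by simp
  moreover have "inv_into S \<phi> (aV a x) = aV a (inv_into S \<phi> x)" if "x \<in> T" for a x
    using inv_into_f_f[OF inj submoduleD(3)[OF S inv_in[OF that]]]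
      hom_onD(3)[OF \<phi>(1) inv_in[OF that]] inv that by simp
  ultimately show ?thesis
    unfolding hom_on_def using inv_in by blast
qed

lemma submodule_image:
  assumes S: "submodule S" and \<phi>: "hom_on S T \<phi>"
  shows "submodule (\<phi> ` S)"
  unfolding submodule_def
proof (intro conjI ballI allI)
  show "0 \<in> \<phi> ` S"
    using hom_on_zero[OF S \<phi>] submoduleD(1)[OF S] by (metis image_eqI)
next
  fix x y
  assume "x \<in> \<phi> ` S" "y \<in> \<phi> ` S"
  then obtain u v where uv: "u \<in> S" "v \<in> S" "x = \<phi> u" "y = \<phi> v"
    by blast
  then have "x + y = \<phi> (u + v)"
    using hom_onD(2)[OF \<phi>] by simp
  then show "x + y \<in> \<phi> ` S"
    using submoduleD(2)[OF S uv(1,2)] by blast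
next
  fix a x
  assume "x \<in> \<phi> ` S"
  then obtain u where u: "u \<in> S" "x = \<phi> u"
    by blast
  then have "aV a x = \<phi> (aV a u)"
    using hom_onD(3)[OF \<phi>] by simp
  then show "aV a x \<in> \<phi> ` S"
    using submoduleD(3)[OF S u(1)] by blast
qed

definition isomorphic :: "'v set \<Rightarrow> 'v set \<Rightarrow> bool" where
  "isomorphic S T \<longleftrightarrow> (\<exists>\<phi>. hom_on S T \<phi> \<and> bij_betw \<phi> S T)"

lemma isomorphic_refl: "isomorphic S S"
  unfolding isomorphic_def using hom_on_id bij_betw_id[unfolded id_def] by blast

lemma isomorphic_sym: "submodule S \<Longrightarrow> isomorphic S T \<Longrightarrow> isomorphic T S"
  unfolding isomorphic_def using hom_on_inv_into bij_betw_inv_into by blast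

lemma isomorphic_trans: "isomorphic S T \<Longrightarrow> isomorphic T U \<Longrightarrow> isomorphic S U"
  unfolding isomorphic_def using hom_on_comp bij_betw_trans[unfolded comp_def] by blast

lemma isomorphic_image:
  assumes "hom_on S T \<phi>" "inj_on \<phi> S" "S' \<subseteq> S"
  shows "isomorphic S' (\<phi> ` S')"
proof -
  have "hom_on S' (\<phi> ` S') \<phi>"
    using assms(1,3) unfolding hom_on_def by blast
  moreover have "bij_betw \<phi> S' (\<phi> ` S')"
    using inj_on_subset[OF assms(2,3)] by (simp add: bij_betw_def)
  ultimately show ?thesis
    unfolding isomorphic_def by blast
qed

definition direct_sum :: "'v set \<Rightarrow> 'v set \<Rightarrow> 'v set \<Rightarrow> bool" where
  "direct_sum A B W \<longleftrightarrow>
     submodule A \<and> submodule B \<and> A \<inter> B = {0} \<and> W = {a + b |a b. a \<in> A \<and> b \<in> B}"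

lemma direct_sumD:
  assumes "direct_sum A B W"
  shows "submodule A" "submodule B" "A \<inter> B = {0}" "W = {a + b |a b. a \<in> A \<and> b \<in> B}"
  using assms unfolding direct_sum_def by auto

lemma direct_sumI:
  assumes "submodule A" "submodule B" "\<And>x. x \<in> A \<Longrightarrow> x \<in> B \<Longrightarrow> x = 0"
    and "\<And>w. w \<in> W \<Longrightarrow> \<exists>a\<in>A. \<exists>b\<in>B. w = a + b" "\<And>a b. a \<in> A \<Longrightarrow> b \<in> B \<Longrightarrow> a + b \<in> W"
  shows "direct_sum A B W"
proof -
  have "A \<inter> B = {0}"
    using assms(3) submoduleD(1)[OF assms(1)] submoduleD(1)[OF assms(2)] by blast
  moreover have "W = {a + b |a b. a \<in> A \<and> b \<in> B}"
    using assms(4,5) by blast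
  ultimately show ?thesis
    unfolding direct_sum_def using assms(1,2) by blast
qed

lemma direct_sum_commute: "direct_sum A B W \<Longrightarrow> direct_sum B A W"
  unfolding direct_sum_def by (auto simp: Int_commute) (metis add.commute)+

lemma direct_sum_subset:
  assumes "direct_sum A B W"
  shows "A \<subseteq> W" "B \<subseteq> W"
  using direct_sumD[OF assms] submoduleD(1)[of A] submoduleD(1)[of B] by force+

lemma direct_sum_submodule:
  assumes "direct_sum A B W"
  shows "submodule W"
  unfolding submodule_def
proof (intro conjI ballI allI)
  note A = submoduleD[OF direct_sumD(1)[OF assms]] and B = submoduleD[OF direct_sumD(2)[OF assms]]
  note W = direct_sumD(4)[OF assms]
  show "0 \<in> W"
    unfolding W using A(1) B(1) by force
  fix x y
  assume "x \<in> W" "y \<in> W"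
  then obtain a b a' b' where "x = a + b" "y = a' + b'" "a \<in> A" "b \<in> B" "a' \<in> A" "b' \<in> B"
    unfolding W by blast
  then show "x + y \<in> W"
    unfolding W using A(2) B(2) by (intro CollectI exI[of _ "a + a'"] exI[of _ "b + b'"])
      (simp add: algebra_simps)
next
  note A = submoduleD[OF direct_sumD(1)[OF assms]] and B = submoduleD[OF direct_sumD(2)[OF assms]]
  note W = direct_sumD(4)[OF assms]
  fix r x
  assume "x \<in> W"
  then obtain a b where "x = a + b" "a \<in> A" "b \<in> B"
    unfolding W by blast
  then show "aV r x \<in> W"
    unfolding W using A(3) B(3) act_add by blast
qed

lemma direct_sum_unique:
  assumes "direct_sum A B W" "a \<in> A" "a' \<in> A" "b \<in> B" "b' \<in> B" "a + b = a' + b'"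
  shows "a = a'" "b = b'"
proof -
  have "a - a' = b' - b"
    using assms(6) by (simp add: algebra_simps)
  moreover have "a - a' \<in> A" "b' - b \<in> B"
    using submoduleD(5) direct_sumD(1,2)[OF assms(1)] assms(2-5) by auto
  ultimately have "a - a' = 0"
    using direct_sumD(3)[OF assms(1)] by (metis IntI singletonD)
  then show "a = a'"
    by simp
  then show "b = b'"
    using assms(6) by simp
qed

definition proj :: "'v set \<Rightarrow> 'v set \<Rightarrow> 'v \<Rightarrow> 'v" where
  "proj A B w = (SOME a. a \<in> A \<and> w - a \<in> B)"

lemma proj_eq:
  assumes "direct_sum A B W" "a \<in> A" "b \<in> B"
  shows "proj A B (a + b) = a"
proof -
  have "proj A B (a + b) \<in> A \<and> (a + b) - proj A B (a + b) \<in> B"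
    unfolding proj_def by (rule someI[of _ a]) (use assms in simp)
  then show ?thesis
    using direct_sum_unique(1)[OF assms(1) assms(2) _ assms(3), of "proj A B (a + b)"]
    by (metis add.commute diff_add_cancel)
qed

lemma proj_left: "direct_sum A B W \<Longrightarrow> a \<in> A \<Longrightarrow> proj A B a = a"
  using proj_eq[of A B W a 0] submoduleD(1)[OF direct_sumD(2)] by simp

lemma proj_right: "direct_sum A B W \<Longrightarrow> b \<in> B \<Longrightarrow> proj A B b = 0"
  using proj_eq[of A B W 0 b] submoduleD(1)[OF direct_sumD(1)] by simp

lemma proj_in:
  assumes "direct_sum A B W" "w \<in> W"
  shows "proj A B w \<in> A" "w - proj A B w \<in> B" "proj B A w = w - proj A B w"
proof -
  obtain a b where ab: "w = a + b" "a \<in> A" "b \<in> B"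
    using assms direct_sumD(4) by blast
  then show "proj A B w \<in> A" "w - proj A B w \<in> B"
    using proj_eq[OF assms(1) ab(2,3)] by auto
  show "proj B A w = w - proj A B w"
    using proj_eq[OF direct_sum_commute[OF assms(1)] ab(3,2)] proj_eq[OF assms(1) ab(2,3)] ab
    by (simp add: add.commute)
qed

lemma proj_decomp: "direct_sum A B W \<Longrightarrow> w \<in> W \<Longrightarrow> w = proj A B w + proj B A w"
  using proj_in by simp

lemma proj_eq_0_imp_right: "direct_sum A B W \<Longrightarrow> w \<in> W \<Longrightarrow> proj A B w = 0 \<Longrightarrow> w \<in> B"
  using proj_in(2)[of A B W w] by simp

lemma proj_hom_on:
  assumes d: "direct_sum A B W"
  shows "hom_on W A (proj A B)"
  unfolding hom_on_def
proof (intro conjI ballI allI)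
  note A = submoduleD[OF direct_sumD(1)[OF d]] and B = submoduleD[OF direct_sumD(2)[OF d]]
  show "proj A B x \<in> A" if "x \<in> W" for x
    using proj_in[OF d that] by simp
  fix x y
  assume "x \<in> W" "y \<in> W"
  then obtain a b a' b' where ab: "x = a + b" "y = a' + b'" "a \<in> A" "b \<in> B" "a' \<in> A" "b' \<in> B"
    using direct_sumD(4)[OF d] by blast
  then have "x + y = (a + a') + (b + b')"
    by (simp add: algebra_simps)
  then have "proj A B (x + y) = a + a'"
    using proj_eq[OF d A(2)[OF ab(3,5)] B(2)[OF ab(4,6)]] by simp
  moreover have "proj A B x = a" "proj A B y = a'"
    using proj_eq[OF d ab(3,4)] proj_eq[OF d ab(5,6)] ab(1,2) by simp_all
  ultimately show "proj A B (x + y) = proj A B x + proj A B y"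
    by simp
next
  note A = submoduleD[OF direct_sumD(1)[OF d]] and B = submoduleD[OF direct_sumD(2)[OF d]]
  fix r x
  assume "x \<in> W"
  then obtain a b where ab: "x = a + b" "a \<in> A" "b \<in> B"
    using direct_sumD(4)[OF d] by blast
  then have "proj A B (aV r x) = aV r a"
    using proj_eq[OF d A(3)[OF ab(2)] B(3)[OF ab(3)]] act_add by simp
  moreover have "proj A B x = a"
    using proj_eq[OF d ab(2,3)] ab(1) by simp
  ultimately show "proj A B (aV r x) = aV r (proj A B x)"
    by simp
qed

lemma complements_isomorphic:
  assumes AX: "direct_sum A X W" and AY: "direct_sum A Y W"
  shows "isomorphic X Y"
proof -
  have YA: "direct_sum Y A W"
    by (rule direct_sum_commute[OF AY])
  have XW: "X \<subseteq> W"
    by (rule direct_sum_subset(2)[OF AX])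
  have \<psi>: "hom_on X Y (proj Y A)"
    by (rule hom_on_mono[OF proj_hom_on[OF YA] XW order.refl])
  have "inj_on (proj Y A) X"
  proof (rule inj_onI)
    fix x x'
    assume x: "x \<in> X" "x' \<in> X" and eq: "proj Y A x = proj Y A x'"
    have "x - x' = proj A Y x - proj A Y x'"
      using proj_decomp[OF AY, of x] proj_decomp[OF AY, of x'] x XW eq
      by (metis add_diff_cancel_right subsetD)
    moreover have "proj A Y x - proj A Y x' \<in> A"
      using submoduleD(5)[OF direct_sumD(1)[OF AY] proj_in(1)[OF AY] proj_in(1)[OF AY]] XW x
      by auto
    moreover have "x - x' \<in> X"
      using submoduleD(5)[OF direct_sumD(2)[OF AX] x] .
    ultimately have "x - x' \<in> A \<inter> X"
      by simp
    then show "x = x'"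
      using direct_sumD(3)[OF AX] by auto
  qed
  moreover have "Y \<subseteq> proj Y A ` X"
  proof
    fix y
    assume y: "y \<in> Y"
    then have "y \<in> W"
      using direct_sum_subset(2)[OF AY] by auto
    then obtain a x where ax: "y = a + x" "a \<in> A" "x \<in> X"
      using direct_sumD(4)[OF AX] by blast
    then have "x = y + - a"
      by (simp add: algebra_simps)
    then have "proj Y A x = y"
      using proj_eq[OF YA y submoduleD(4)[OF direct_sumD(1)[OF AX] ax(2)]] by simp
    then show "y \<in> proj Y A ` X"
      using ax(3) by blast
  qed
  then have "proj Y A ` X = Y"
    using hom_onD(1)[OF \<psi>] by blast
  ultimately show ?thesis
    unfolding isomorphic_def bij_betw_def using \<psi> by blast
qed

lemma hom_on_direct_sum_map:
  assumes d: "direct_sum A B S" and d': "direct_sum A' B' S'"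
    and \<phi>: "hom_on A A' \<phi>" and \<psi>: "hom_on B B' \<psi>"
  shows "hom_on S S' (\<lambda>s. \<phi> (proj A B s) + \<psi> (proj B A s))"
  unfolding hom_on_def
proof (intro conjI ballI allI)
  note pA = proj_hom_on[OF d] and pB = proj_hom_on[OF direct_sum_commute[OF d]]
  fix x
  assume x: "x \<in> S"
  show "\<phi> (proj A B x) + \<psi> (proj B A x) \<in> S'"
    unfolding direct_sumD(4)[OF d']
    using hom_onD(1)[OF \<phi> hom_onD(1)[OF pA x]] hom_onD(1)[OF \<psi> hom_onD(1)[OF pB x]] by blast
  show "\<phi> (proj A B (aV a x)) + \<psi> (proj B A (aV a x))
      = aV a (\<phi> (proj A B x) + \<psi> (proj B A x))" for a
    unfolding hom_onD(3)[OF pA x] hom_onD(3)[OF pB x] hom_onD(3)[OF \<phi> hom_onD(1)[OF pA x]]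
      hom_onD(3)[OF \<psi> hom_onD(1)[OF pB x]] act_add ..
  fix y
  assume y: "y \<in> S"
  show "\<phi> (proj A B (x + y)) + \<psi> (proj B A (x + y))
      = \<phi> (proj A B x) + \<psi> (proj B A x) + (\<phi> (proj A B y) + \<psi> (proj B A y))"
    unfolding hom_onD(2)[OF pA x y] hom_onD(2)[OF pB x y]
      hom_onD(2)[OF \<phi> hom_onD(1)[OF pA x] hom_onD(1)[OF pA y]]
      hom_onD(2)[OF \<psi> hom_onD(1)[OF pB x] hom_onD(1)[OF pB y]]
    by (simp add: algebra_simps)
qed

lemma direct_sum_isomorphic:
  assumes d: "direct_sum A B S" and d': "direct_sum A' B' S'"
    and "isomorphic A A'" "isomorphic B B'"
  shows "isomorphic S S'"
proof -
  obtain \<phi> where \<phi>: "hom_on A A' \<phi>" "bij_betw \<phi> A A'"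
    using assms(3) unfolding isomorphic_def by blast
  obtain \<psi> where \<psi>: "hom_on B B' \<psi>" "bij_betw \<psi> B B'"
    using assms(4) unfolding isomorphic_def by blast
  have dBA: "direct_sum B A S"
    by (rule direct_sum_commute[OF d])
  define \<chi> where "\<chi> s = \<phi> (proj A B s) + \<psi> (proj B A s)" for s
  have \<chi>: "hom_on S S' \<chi>"
    unfolding \<chi>_def by (rule hom_on_direct_sum_map[OF d d' \<phi>(1) \<psi>(1)])
  have "inj_on \<chi> S"
  proof (rule inj_onI)
    fix x y
    assume xy: "x \<in> S" "y \<in> S" and eq: "\<chi> x = \<chi> y"
    note pA = hom_onD(1)[OF proj_hom_on[OF d]] and pB = hom_onD(1)[OF proj_hom_on[OF dBA]]
    have "\<phi> (proj A B x) = \<phi> (proj A B y)" "\<psi> (proj B A x) = \<psi> (proj B A y)"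
      using direct_sum_unique[OF d' hom_onD(1)[OF \<phi>(1) pA[OF xy(1)]]
          hom_onD(1)[OF \<phi>(1) pA[OF xy(2)]] hom_onD(1)[OF \<psi>(1) pB[OF xy(1)]]
          hom_onD(1)[OF \<psi>(1) pB[OF xy(2)]]] eq
      unfolding \<chi>_def by auto
    then have "proj A B x = proj A B y" "proj B A x = proj B A y"
      using \<phi>(2) \<psi>(2) pA pB xy unfolding bij_betw_def by (auto dest: inj_onD)
    then show "x = y"
      using proj_decomp[OF d xy(1)] proj_decomp[OF d xy(2)] by simp
  qed
  moreover have "S' \<subseteq> \<chi> ` S"
  proof
    fix s'
    assume "s' \<in> S'"
    then obtain a' b' where ab': "s' = a' + b'" "a' \<in> A'" "b' \<in> B'"
      using direct_sumD(4)[OF d'] by blast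
    obtain a b where ab: "a \<in> A" "a' = \<phi> a" "b \<in> B" "b' = \<psi> b"
      using ab'(2,3) \<phi>(2) \<psi>(2) unfolding bij_betw_def by blast
    have "proj A B (a + b) = a" "proj B A (a + b) = b"
      using proj_eq[OF d ab(1,3)] proj_eq[OF dBA ab(3,1)] by (simp_all add: add.commute)
    then have "\<chi> (a + b) = s'"
      unfolding \<chi>_def using ab' ab by simp
    moreover have "a + b \<in> S"
      using direct_sumD(4)[OF d] ab by blast
    ultimately show "s' \<in> \<chi> ` S"
      by blast
  qed
  then have "\<chi> ` S = S'"
    using hom_onD(1)[OF \<chi>] by blast
  ultimately show ?thesis
    unfolding isomorphic_def bij_betw_def using \<chi> by blast
qed

lemma direct_sum_image:
  assumes W: "submodule W" and \<phi>: "hom_on W W' \<phi>" "bij_betw \<phi> W W'" and d: "direct_sum A B W"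
  shows "direct_sum (\<phi> ` A) (\<phi> ` B) W'"
proof -
  have AW: "A \<subseteq> W" and BW: "B \<subseteq> W"
    using direct_sum_subset[OF d] by auto
  have inj: "inj_on \<phi> W" and image: "\<phi> ` W = W'"
    using \<phi>(2) by (auto simp: bij_betw_def)
  show ?thesis
  proof (rule direct_sumI)
    show "submodule (\<phi> ` A)" "submodule (\<phi> ` B)"
      using submodule_image[OF direct_sumD(1)[OF d] hom_on_mono[OF \<phi>(1) AW order.refl]]
        submodule_image[OF direct_sumD(2)[OF d] hom_on_mono[OF \<phi>(1) BW order.refl]] .
  next
    fix y
    assume "y \<in> \<phi> ` A" "y \<in> \<phi> ` B"
    then obtain a b where ab: "a \<in> A" "b \<in> B" "y = \<phi> a" "y = \<phi> b"
      by blast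
    then have "a = b"
      using inj AW BW by (metis inj_onD subsetD)
    then have "a = 0"
      using ab direct_sumD(3)[OF d] by blast
    then show "y = 0"
      using ab hom_on_zero[OF W \<phi>(1)] by simp
  next
    fix w'
    assume "w' \<in> W'"
    then obtain w where w: "w \<in> W" "w' = \<phi> w"
      using image by blast
    then obtain a b where ab: "w = a + b" "a \<in> A" "b \<in> B"
      using direct_sumD(4)[OF d] by blast
    then have "w' = \<phi> a + \<phi> b"
      using w hom_onD(2)[OF \<phi>(1)] AW BW by auto
    then show "\<exists>a'\<in>\<phi> ` A. \<exists>b'\<in>\<phi> ` B. w' = a' + b'"
      using ab by blast
  next
    fix a' b'
    assume "a' \<in> \<phi> ` A" "b' \<in> \<phi> ` B"
    then obtain a b where ab: "a \<in> A" "b \<in> B" "a' = \<phi> a" "b' = \<phi> b"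
      by blast
    then have "a' + b' = \<phi> (a + b)"
      using hom_onD(2)[OF \<phi>(1) subsetD[OF AW ab(1)] subsetD[OF BW ab(2)]] by simp
    moreover have "a + b \<in> W"
      using direct_sumD(4)[OF d] ab by blast
    ultimately show "a' + b' \<in> W'"
      using image by blast
  qed
qed

lemma dim_le_of_subset: "S \<subseteq> T \<Longrightarrow> V.dim S \<le> V.dim T"
  using finite_spanning_set V.dim_subset_finite_span by metis

lemma submodule_eq_if_dim_le:
  "submodule S \<Longrightarrow> submodule T \<Longrightarrow> S \<subseteq> T \<Longrightarrow> V.dim T \<le> V.dim S \<Longrightarrow> S = T"
  using finite_spanning_set V.subspace_dim_equal_finite_span submodule_subspace by metis

lemma dim_less_of_psubset: "submodule S \<Longrightarrow> submodule T \<Longrightarrow> S \<subset> T \<Longrightarrow> V.dim S < V.dim T"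
  using finite_spanning_set V.dim_psubset_finite_span submodule_subspace by metis

lemma hom_on_linear_extension:
  assumes "submodule S" "hom_on S T \<phi>"
  obtains g where "Vector_Spaces.linear sV sV g" "\<And>x. x \<in> S \<Longrightarrow> g x = \<phi> x"
  using V.exists_linear_extension_on_subspace[OF submodule_subspace[OF assms(1)], of \<phi>]
    hom_onD(2)[OF assms(2)] hom_on_scale[OF assms(2)] by blast

lemma rank_nullity_hom_on:
  assumes "submodule M" "hom_on M T \<phi>"
  shows "V.dim M = V.dim {m \<in> M. \<phi> m = 0} + V.dim (\<phi> ` M)"
proof -
  interpret vector_space_pair sV sV ..
  obtain g where g: "Vector_Spaces.linear sV sV g" "\<And>x. x \<in> M \<Longrightarrow> g x = \<phi> x"
    using hom_on_linear_extension[OF assms] by blast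
  obtain F where "finite F" "M \<subseteq> V.span F"
    using finite_spanning_set by metis
  moreover have "M \<inter> {x. g x = 0} = {m \<in> M. \<phi> m = 0}" "g ` M = \<phi> ` M"
    using g(2) by auto
  ultimately show ?thesis
    using rank_nullity[OF g(1) _ _ submodule_subspace[OF assms(1)]] by metis
qed

lemma dim_image_hom_on_inj:
  assumes "submodule S" "hom_on S T \<phi>" "inj_on \<phi> S"
  shows "V.dim (\<phi> ` S) = V.dim S"
proof -
  have "{m \<in> S. \<phi> m = 0} = {0}"
    using assms(3) submoduleD(1)[OF assms(1)] hom_on_zero[OF assms(1,2)]
    unfolding inj_on_def by auto
  then show ?thesis
    using rank_nullity_hom_on[OF assms(1,2)] V.dim_span[of "{}"]
      V.dim_eq_card_independent[OF V.independent_empty]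
    by simp
qed

lemma isomorphic_dim_eq: "submodule S \<Longrightarrow> isomorphic S T \<Longrightarrow> V.dim S = V.dim T"
  unfolding isomorphic_def bij_betw_def using dim_image_hom_on_inj by metis

end

section \<open>Fitting's lemma\<close>

context fin_dim_module
begin

definition indecomposable :: "'v set \<Rightarrow> bool" where
  "indecomposable M \<longleftrightarrow> (\<forall>A B. direct_sum A B M \<longrightarrow> A = {0} \<or> B = {0})"

lemma hom_on_funpow: "hom_on M M \<theta> \<Longrightarrow> hom_on M M (\<theta> ^^ n)"
proof (induction n)
  case 0
  then show ?case
    using hom_on_id by simp
next
  case (Suc n)
  have "hom_on M M (\<lambda>x. \<theta> ((\<theta> ^^ n) x))"
    by (rule hom_on_comp[OF Suc.IH[OF Suc.prems] Suc.prems])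
  then show ?case
    by (simp add: comp_def)
qed

lemma submodule_kernel:
  assumes "submodule M" "hom_on M T \<phi>"
  shows "submodule {m \<in> M. \<phi> m = 0}"
  unfolding submodule_def
proof (intro conjI ballI allI)
  show "0 \<in> {m \<in> M. \<phi> m = 0}"
    using submoduleD(1)[OF assms(1)] hom_on_zero[OF assms] by simp
  show "x + y \<in> {m \<in> M. \<phi> m = 0}" if "x \<in> {m \<in> M. \<phi> m = 0}" "y \<in> {m \<in> M. \<phi> m = 0}" for x y
    using that hom_onD(2)[OF assms(2)] submoduleD(2)[OF assms(1)] by simp
  show "aV a x \<in> {m \<in> M. \<phi> m = 0}" if "x \<in> {m \<in> M. \<phi> m = 0}" for a x
    using that hom_onD(3)[OF assms(2)] submoduleD(3)[OF assms(1)] act_zero by simp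
qed

lemma hom_on_diff_fun:
  assumes "submodule T" "hom_on M T \<phi>" "hom_on M T \<psi>"
  shows "hom_on M T (\<lambda>m. \<phi> m - \<psi> m)"
  unfolding hom_on_def
proof (intro conjI ballI allI)
  show "\<phi> x - \<psi> x \<in> T" if "x \<in> M" for x
    using submoduleD(5)[OF assms(1) hom_onD(1)[OF assms(2) that] hom_onD(1)[OF assms(3) that]] .
  show "\<phi> (x + y) - \<psi> (x + y) = \<phi> x - \<psi> x + (\<phi> y - \<psi> y)" if "x \<in> M" "y \<in> M" for x y
    using hom_onD(2)[OF assms(2) that] hom_onD(2)[OF assms(3) that] by (simp add: algebra_simps)
  show "\<phi> (aV a x) - \<psi> (aV a x) = aV a (\<phi> x - \<psi> x)" if "x \<in> M" for a x
    using hom_onD(3)[OF assms(2) that] hom_onD(3)[OF assms(3) that] act_diff by simp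
qed

lemma hom_on_inj_imp_bij:
  assumes "submodule M" "hom_on M M \<theta>" "inj_on \<theta> M"
  shows "bij_betw \<theta> M M"
proof -
  have "\<theta> ` M \<subseteq> M"
    using hom_onD(1)[OF assms(2)] by blast
  then have "\<theta> ` M = M"
    using submodule_eq_if_dim_le[OF submodule_image[OF assms(1,2)] assms(1)]
      dim_image_hom_on_inj[OF assms] by simp
  then show ?thesis
    using assms(3) by (simp add: bij_betw_def)
qed

text \<open>The images of the powers of \<open>\<theta>\<close> decrease and the kernels increase; both stabilise
  because the dimension is finite, and by rank--nullity they stabilise together.\<close>
lemma funpow_image_kernel_stable:
  assumes M: "submodule M" and \<theta>: "hom_on M M \<theta>"
  obtains n where "0 < n" "(\<theta> ^^ (n + n)) ` M = (\<theta> ^^ n) ` M"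
    "{m \<in> M. (\<theta> ^^ (n + n)) m = 0} = {m \<in> M. (\<theta> ^^ n) m = 0}"
proof -
  define K where "K k = {m \<in> M. (\<theta> ^^ k) m = 0}" for k
  define I where "I k = (\<theta> ^^ k) ` M" for k
  have pow: "hom_on M M (\<theta> ^^ k)" for k
    by (rule hom_on_funpow[OF \<theta>])
  have I_mono: "I j \<subseteq> I k" if "k \<le> j" for j k
  proof
    fix x
    assume "x \<in> I j"
    then obtain m where m: "m \<in> M" "x = (\<theta> ^^ j) m"
      unfolding I_def by blast
    then have "x = (\<theta> ^^ k) ((\<theta> ^^ (j - k)) m)"
      using that by (metis funpow_add le_add_diff_inverse o_apply)
    then show "x \<in> I k"
      using hom_onD(1)[OF pow m(1)] unfolding I_def by blast
  qed
  have K_mono: "K k \<subseteq> K j" if "k \<le> j" for j k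
  proof
    fix x
    assume "x \<in> K k"
    moreover have "(\<theta> ^^ j) x = (\<theta> ^^ (j - k)) ((\<theta> ^^ k) x)"
      using that by (metis funpow_add le_add_diff_inverse2 o_apply)
    ultimately show "x \<in> K j"
      using hom_on_zero[OF M pow] unfolding K_def by simp
  qed
  obtain n0 where n0: "\<And>j. V.dim (I n0) \<le> V.dim (I j)"
    using ex_has_least_nat[of "\<lambda>j. True" 0 "\<lambda>j. V.dim (I j)"] by blast
  have I_stable: "I j = I n0" if "n0 \<le> j" for j
    using submodule_eq_if_dim_le[OF _ _ I_mono[OF that] n0] submodule_image[OF M pow]
    unfolding I_def by blast
  define n where "n = Suc n0"
  have I_eq: "I (n + n) = I n"
    using I_stable[of n] I_stable[of "n + n"] unfolding n_def by simp
  have "V.dim M = V.dim (K k) + V.dim (I k)" for k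
    using rank_nullity_hom_on[OF M pow] unfolding K_def I_def by blast
  then have "V.dim (K (n + n)) \<le> V.dim (K n)"
    using I_eq by (metis add_right_cancel order.refl)
  moreover have "submodule (K k)" for k
    unfolding K_def by (rule submodule_kernel[OF M pow])
  ultimately have "K n = K (n + n)"
    using submodule_eq_if_dim_le[OF _ _ K_mono] by simp
  moreover have "0 < n"
    by (simp add: n_def)
  ultimately show ?thesis
    using that I_eq unfolding I_def K_def by simp
qed

lemma fitting_decomposition:
  assumes M: "submodule M" and \<theta>: "hom_on M M \<theta>"
    and I: "(\<theta> ^^ (n + n)) ` M = (\<theta> ^^ n) ` M"
    and K: "{m \<in> M. (\<theta> ^^ (n + n)) m = 0} = {m \<in> M. (\<theta> ^^ n) m = 0}"
  shows "direct_sum {m \<in> M. (\<theta> ^^ n) m = 0} ((\<theta> ^^ n) ` M) M"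
proof -
  have pow: "hom_on M M (\<theta> ^^ n)"
    by (rule hom_on_funpow[OF \<theta>])
  have twice: "(\<theta> ^^ (n + n)) m = (\<theta> ^^ n) ((\<theta> ^^ n) m)" for m
    by (simp add: funpow_add)
  have zero: "x = 0" if x: "x \<in> {m \<in> M. (\<theta> ^^ n) m = 0}" "x \<in> (\<theta> ^^ n) ` M" for x
  proof -
    obtain y where y: "y \<in> M" "x = (\<theta> ^^ n) y"
      using x(2) by blast
    then have "y \<in> {m \<in> M. (\<theta> ^^ (n + n)) m = 0}"
      using x(1) twice by simp
    then show "x = 0"
      using K y by simp
  qed
  have decompose: "\<exists>a\<in>{m \<in> M. (\<theta> ^^ n) m = 0}. \<exists>b\<in>(\<theta> ^^ n) ` M. m = a + b"
    if m: "m \<in> M" for m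
  proof -
    have "(\<theta> ^^ n) m \<in> (\<theta> ^^ (n + n)) ` M"
      unfolding I using m by blast
    then obtain y where y: "y \<in> M" "(\<theta> ^^ n) m = (\<theta> ^^ (n + n)) y"
      by blast
    define z where "z = (\<theta> ^^ n) y"
    have z: "z \<in> (\<theta> ^^ n) ` M" "z \<in> M"
      unfolding z_def using y(1) hom_onD(1)[OF pow] by auto
    have "(\<theta> ^^ n) (m - z) = 0"
      using hom_on_diff[OF M pow m z(2)] y(2) twice unfolding z_def by simp
    moreover have "m = (m - z) + z"
      by simp
    ultimately show ?thesis
      using submoduleD(5)[OF M m z(2)] z(1) by blast
  qed
  have closed: "a + b \<in> M" if "a \<in> {m \<in> M. (\<theta> ^^ n) m = 0}" "b \<in> (\<theta> ^^ n) ` M" for a b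
    using that hom_onD(1)[OF pow] submoduleD(2)[OF M] by blast
  show ?thesis
    by (rule direct_sumI[OF submodule_kernel[OF M pow] submodule_image[OF M pow]
          zero decompose closed])
qed

lemma fitting:
  assumes M: "submodule M" and \<theta>: "hom_on M M \<theta>" and ind: "indecomposable M"
  shows "bij_betw \<theta> M M \<or> (\<exists>n. \<forall>m\<in>M. (\<theta> ^^ n) m = 0)"
proof -
  obtain n where n: "0 < n" "(\<theta> ^^ (n + n)) ` M = (\<theta> ^^ n) ` M"
    "{m \<in> M. (\<theta> ^^ (n + n)) m = 0} = {m \<in> M. (\<theta> ^^ n) m = 0}"
    by (rule funpow_image_kernel_stable[OF M \<theta>])
  have pow: "hom_on M M (\<theta> ^^ n)"
    by (rule hom_on_funpow[OF \<theta>])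
  have "{m \<in> M. (\<theta> ^^ n) m = 0} = {0} \<or> (\<theta> ^^ n) ` M = {0}"
    using ind fitting_decomposition[OF M \<theta> n(2,3)] unfolding indecomposable_def by blast
  then show ?thesis
  proof
    assume kernel: "{m \<in> M. (\<theta> ^^ n) m = 0} = {0}"
    have "inj_on (\<theta> ^^ n) M"
    proof (rule inj_onI)
      fix x y
      assume "x \<in> M" "y \<in> M" "(\<theta> ^^ n) x = (\<theta> ^^ n) y"
      then have "x - y \<in> {m \<in> M. (\<theta> ^^ n) m = 0}"
        using hom_on_diff[OF M pow] submoduleD(5)[OF M] by simp
      then show "x = y"
        using kernel by simp
    qed
    moreover have "\<theta> ^^ n = \<theta> ^^ (n - 1) \<circ> \<theta>"
      using n(1) funpow_Suc_right[of "n - 1" \<theta>] by simp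
    ultimately have "inj_on \<theta> M"
      using inj_on_imageI2 by metis
    then show ?thesis
      using hom_on_inj_imp_bij[OF M \<theta>] by blast
  next
    assume "(\<theta> ^^ n) ` M = {0}"
    then show ?thesis
      by auto
  qed
qed

lemma bij_betw_id_minus_nilpotent:
  assumes M: "submodule M" and \<theta>: "hom_on M M \<theta>" and nil: "\<forall>m\<in>M. (\<theta> ^^ n) m = 0"
  shows "bij_betw (\<lambda>m. m - \<theta> m) M M"
proof -
  have fixed_point: "m = 0" if "m \<in> M" "\<theta> m = m" for m
  proof -
    have "(\<theta> ^^ k) m = m" for k
      using that(2) by (induction k) simp_all
    then show ?thesis
      using nil that(1) by metis
  qed
  have "inj_on (\<lambda>m. m - \<theta> m) M"
  proof (rule inj_onI)
    fix x y
    assume xy: "x \<in> M" "y \<in> M" "x - \<theta> x = y - \<theta> y"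
    have "\<theta> (x - y) = \<theta> x - \<theta> y"
      by (rule hom_on_diff[OF M \<theta> xy(1,2)])
    also have "\<dots> = x - y"
      using xy(3) by (simp add: algebra_simps)
    finally have "\<theta> (x - y) = x - y" .
    then show "x = y"
      using fixed_point[OF submoduleD(5)[OF M xy(1,2)]] by simp
  qed
  then show ?thesis
    by (rule hom_on_inj_imp_bij[OF M hom_on_diff_fun[OF M hom_on_id \<theta>]])
qed

end

section \<open>Cancellation of direct summands\<close>

context fin_dim_module
begin

lemma direct_sum_assoc:
  assumes d: "direct_sum M X W" and d': "direct_sum M' M'' M"
  defines "W'' \<equiv> {a + b |a b. a \<in> M'' \<and> b \<in> X}"
  shows "direct_sum M'' X W''" "direct_sum M' W'' W"
proof -
  have M': "M' \<subseteq> M" and M'': "M'' \<subseteq> M"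
    using direct_sum_subset[OF d'] by auto
  have M: "submodule M"
    by (rule direct_sum_submodule[OF d'])
  show d'': "direct_sum M'' X W''"
    unfolding W''_def
    by (rule direct_sumI[OF direct_sumD(2)[OF d'] direct_sumD(2)[OF d]])
      (use direct_sumD(3)[OF d] M'' in auto)
  show "direct_sum M' W'' W"
  proof (rule direct_sumI[OF direct_sumD(1)[OF d'] direct_sum_submodule[OF d'']])
    fix x
    assume x: "x \<in> M'" "x \<in> W''"
    then obtain a b where ab: "x = a + b" "a \<in> M''" "b \<in> X"
      unfolding W''_def by blast
    have "x - a \<in> M"
      using submoduleD(5)[OF M] x(1) ab(2) M' M'' by blast
    then have "b = 0"
      using direct_sumD(3)[OF d] ab by auto
    then have "x \<in> M' \<inter> M''"
      using x ab by simp
    then show "x = 0"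
      using direct_sumD(3)[OF d'] by blast
  next
    fix w
    assume "w \<in> W"
    then obtain m x where mx: "w = m + x" "m \<in> M" "x \<in> X"
      using direct_sumD(4)[OF d] by blast
    then obtain m' m'' where mm: "m = m' + m''" "m' \<in> M'" "m'' \<in> M''"
      using direct_sumD(4)[OF d'] by blast
    have "w = m' + (m'' + x)"
      using mx mm by (simp add: add.assoc)
    moreover have "m'' + x \<in> W''"
      unfolding W''_def using mm mx by blast
    ultimately show "\<exists>a\<in>M'. \<exists>b\<in>W''. w = a + b"
      using mm(2) by blast
  next
    fix a b
    assume ab: "a \<in> M'" "b \<in> W''"
    then obtain m'' x where mx: "b = m'' + x" "m'' \<in> M''" "x \<in> X"
      unfolding W''_def by blast
    have "a + b = (a + m'') + x"
      using mx by (simp add: add.assoc)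
    moreover have "a + m'' \<in> M"
      using direct_sumD(4)[OF d'] ab(1) mx(2) by blast
    ultimately show "a + b \<in> W"
      using direct_sumD(4)[OF d] mx(3) by blast
  qed
qed

lemma direct_sum_proj_image:
  assumes d: "direct_sum M X W" and \<rho>: "hom_on M W \<rho>"
    and bij: "bij_betw (\<lambda>m. proj M X (\<rho> m)) M M"
  shows "direct_sum (\<rho> ` M) X W" "inj_on \<rho> M"
proof -
  have M: "submodule M" and X: "submodule X" and W: "submodule W"
    using direct_sumD(1,2)[OF d] direct_sum_submodule[OF d] by auto
  have \<pi>: "hom_on W M (proj M X)"
    by (rule proj_hom_on[OF d])
  have inj: "inj_on (\<lambda>m. proj M X (\<rho> m)) M"
    using bij by (simp add: bij_betw_def)
  then show "inj_on \<rho> M"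
    by (auto simp: inj_on_def)
  have \<rho>0: "\<rho> 0 = 0"
    by (rule hom_on_zero[OF M \<rho>])
  show "direct_sum (\<rho> ` M) X W"
  proof (rule direct_sumI[OF submodule_image[OF M \<rho>] X])
    fix x
    assume x: "x \<in> \<rho> ` M" "x \<in> X"
    then obtain m where m: "m \<in> M" "x = \<rho> m"
      by blast
    have "proj M X (\<rho> m) = proj M X (\<rho> 0)"
      using proj_right[OF d x(2)] proj_right[OF d submoduleD(1)[OF X]] m \<rho>0 by simp
    then have "m = 0"
      using inj_onD[OF inj _ m(1) submoduleD(1)[OF M]] by blast
    then show "x = 0"
      using m \<rho>0 by simp
  next
    fix w
    assume w: "w \<in> W"
    obtain m where m: "m \<in> M" "proj M X w = proj M X (\<rho> m)"
      using proj_in(1)[OF d w] bij unfolding bij_betw_def by force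
    have \<rho>m: "\<rho> m \<in> W"
      using hom_onD(1)[OF \<rho> m(1)] .
    have "proj M X (w - \<rho> m) = 0"
      using hom_on_diff[OF W \<pi> w \<rho>m] m(2) by simp
    then have "w - \<rho> m \<in> X"
      using proj_eq_0_imp_right[OF d submoduleD(5)[OF W w \<rho>m]] by blast
    moreover have "w = \<rho> m + (w - \<rho> m)"
      by simp
    ultimately show "\<exists>a\<in>\<rho> ` M. \<exists>b\<in>X. w = a + b"
      using m(1) by blast
  next
    fix a b
    assume "a \<in> \<rho> ` M" "b \<in> X"
    then show "a + b \<in> W"
      using hom_onD(1)[OF \<rho>] direct_sum_subset(2)[OF d] submoduleD(2)[OF W] by blast
  qed
qed

text \<open>If \<open>M\<close> is indecomposable, one of the two projections of \<open>W = N \<oplus> Y\<close> maps \<open>M\<close>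
  isomorphically onto a complement of \<open>X\<close>: by Fitting's lemma the endomorphism
  \<open>\<pi> \<circ> p\<close> of \<open>M\<close> is either bijective or nilpotent, and in the second case
  \<open>\<pi> \<circ> q = id - \<pi> \<circ> p\<close> is bijective.\<close>
lemma indecomposable_exchange:
  assumes dMX: "direct_sum M X W" and dNY: "direct_sum N Y W" and ind: "indecomposable M"
  shows "direct_sum (proj N Y ` M) X W \<and> inj_on (proj N Y) M
    \<or> direct_sum (proj Y N ` M) X W \<and> inj_on (proj Y N) M"
proof -
  define \<pi> where "\<pi> = proj M X"
  define p where "p = proj N Y"
  define q where "q = proj Y N"
  have M: "submodule M" and W: "submodule W"
    using direct_sumD(1)[OF dMX] direct_sum_submodule[OF dMX] .
  have MW: "M \<subseteq> W" and NW: "N \<subseteq> W" and YW: "Y \<subseteq> W"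
    using direct_sum_subset[OF dMX] direct_sum_subset[OF dNY] by auto
  have \<pi>: "hom_on W M \<pi>"
    unfolding \<pi>_def by (rule proj_hom_on[OF dMX])
  have p: "hom_on M W p"
    unfolding p_def using hom_on_mono[OF proj_hom_on[OF dNY] MW NW] .
  have q: "hom_on M W q"
    unfolding q_def using hom_on_mono[OF proj_hom_on[OF direct_sum_commute[OF dNY]] MW YW] .
  have \<theta>: "hom_on M M (\<lambda>m. \<pi> (p m))"
    by (rule hom_on_comp[OF p \<pi>])
  from fitting[OF M \<theta> ind] show ?thesis
  proof
    assume "bij_betw (\<lambda>m. \<pi> (p m)) M M"
    then show ?thesis
      using direct_sum_proj_image[OF dMX p] unfolding \<pi>_def p_def by blast
  next
    assume "\<exists>n. \<forall>m\<in>M. ((\<lambda>m. \<pi> (p m)) ^^ n) m = 0"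
    then have "bij_betw (\<lambda>m. m - \<pi> (p m)) M M"
      using bij_betw_id_minus_nilpotent[OF M \<theta>] by blast
    moreover have "\<pi> (q m) = m - \<pi> (p m)" if m: "m \<in> M" for m
    proof -
      have "q m = m - p m"
        unfolding q_def p_def using proj_in(3)[OF dNY] m MW by blast
      then have "\<pi> (q m) = \<pi> m - \<pi> (p m)"
        using hom_on_diff[OF W \<pi>] m MW hom_onD(1)[OF p m] by auto
      then show ?thesis
        using proj_left[OF dMX m] unfolding \<pi>_def by simp
    qed
    ultimately have "bij_betw (\<lambda>m. \<pi> (q m)) M M"
      using bij_betw_cong[of M "\<lambda>m. \<pi> (q m)" "\<lambda>m. m - \<pi> (p m)" M] by simp
    then show ?thesis
      using direct_sum_proj_image[OF dMX q] unfolding \<pi>_def q_def by blast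
  qed
qed

lemma direct_sum_Int_complement:
  assumes d: "direct_sum Q X W" and Y: "submodule Y" "Q \<subseteq> Y" "Y \<subseteq> W"
  shows "direct_sum Q (X \<inter> Y) Y"
proof (rule direct_sumI[OF direct_sumD(1)[OF d] submodule_Int[OF direct_sumD(2)[OF d] Y(1)]])
  fix x
  assume "x \<in> Q" "x \<in> X \<inter> Y"
  then have "x \<in> Q \<inter> X"
    by blast
  then show "x = 0"
    using direct_sumD(3)[OF d] by simp
next
  fix y
  assume y: "y \<in> Y"
  then have "y \<in> W"
    using Y(3) by blast
  then obtain a x where ax: "y = a + x" "a \<in> Q" "x \<in> X"
    using direct_sumD(4)[OF d] by blast
  have "y - a \<in> Y"
    using submoduleD(5)[OF Y(1) y] ax(2) Y(2) by blast
  then have "x \<in> X \<inter> Y"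
    using ax(1,3) by simp
  with ax(1,2) show "\<exists>a\<in>Q. \<exists>b\<in>X \<inter> Y. y = a + b"
    by blast
next
  fix a b
  assume "a \<in> Q" "b \<in> X \<inter> Y"
  then have "a \<in> Y" "b \<in> Y"
    using Y(2) by auto
  then show "a + b \<in> Y"
    by (rule submoduleD(2)[OF Y(1)])
qed

text \<open>With \<open>Z = X \<inter> Y\<close> we have \<open>Y = Q \<oplus> Z\<close>, hence \<open>W = Q \<oplus> (Z \<oplus> N)\<close>, so
  \<open>X \<cong> Z \<oplus> N \<cong> Z \<oplus> Q = Y\<close>.\<close>
lemma cancel_summand_in_complement:
  assumes dQX: "direct_sum Q X W" and dNY: "direct_sum N Y W" and QY: "Q \<subseteq> Y"
    and iso: "isomorphic N Q"
  shows "isomorphic X Y"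
proof -
  define Z where "Z = X \<inter> Y"
  define W' where "W' = {a + b |a b. a \<in> Z \<and> b \<in> N}"
  have dQZ: "direct_sum Q Z Y"
    unfolding Z_def
    by (rule direct_sum_Int_complement[OF dQX direct_sumD(2)[OF dNY] QY
          direct_sum_subset(2)[OF dNY]])
  have "direct_sum Z N W'" "direct_sum Q W' W"
    unfolding W'_def by (rule direct_sum_assoc[OF direct_sum_commute[OF dNY] dQZ])+
  then show ?thesis
    using isomorphic_trans[OF complements_isomorphic[OF dQX]
        direct_sum_isomorphic[OF _ direct_sum_commute[OF dQZ] isomorphic_refl iso]] by blast
qed

lemma cancel_indecomposable:
  assumes dMX: "direct_sum M X W" and dNY: "direct_sum N Y W" and iso: "isomorphic M N"
    and ind: "indecomposable M"
  shows "isomorphic X Y"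
proof -
  have M: "submodule M" and N: "submodule N"
    using direct_sumD(1)[OF dMX] direct_sumD(1)[OF dNY] .
  have MW: "M \<subseteq> W"
    using direct_sum_subset(1)[OF dMX] .
  consider "direct_sum (proj N Y ` M) X W" "inj_on (proj N Y) M"
    | "direct_sum (proj Y N ` M) X W" "inj_on (proj Y N) M"
    using indecomposable_exchange[OF dMX dNY ind] by blast
  then show ?thesis
  proof cases
    case 1
    have p: "hom_on M N (proj N Y)"
      using hom_on_mono[OF proj_hom_on[OF dNY] MW order.refl] .
    have "V.dim N \<le> V.dim (proj N Y ` M)"
      using dim_image_hom_on_inj[OF M p 1(2)] isomorphic_dim_eq[OF M iso] by simp
    moreover have "proj N Y ` M \<subseteq> N"
      using hom_onD(1)[OF p] by blast
    ultimately have "proj N Y ` M = N"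
      using submodule_eq_if_dim_le[OF submodule_image[OF M p] N] by blast
    then show ?thesis
      using complements_isomorphic[OF _ dNY] 1(1) by simp
  next
    case 2
    have q: "hom_on M Y (proj Y N)"
      using hom_on_mono[OF proj_hom_on[OF direct_sum_commute[OF dNY]] MW order.refl] .
    have "isomorphic N (proj Y N ` M)"
      using isomorphic_trans[OF isomorphic_sym[OF M iso] isomorphic_image[OF q 2(2) order.refl]] .
    moreover have "proj Y N ` M \<subseteq> Y"
      using hom_onD(1)[OF q] by blast
    ultimately show ?thesis
      using cancel_summand_in_complement[OF 2(1) dNY] by blast
  qed
qed

end

context fin_dim_module
begin

lemma dim_less_if_direct_sum:
  assumes "direct_sum A B W" "B \<noteq> {0}"
  shows "V.dim A < V.dim W"
proof -
  obtain b where "b \<in> B" "b \<noteq> 0"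
    using assms(2) submoduleD(1)[OF direct_sumD(2)[OF assms(1)]] by blast
  then have "b \<notin> A"
    using direct_sumD(3)[OF assms(1)] by blast
  then have "A \<subset> W"
    using direct_sum_subset[OF assms(1)] \<open>b \<in> B\<close> by blast
  then show ?thesis
    by (rule dim_less_of_psubset[OF direct_sumD(1)[OF assms(1)] direct_sum_submodule[OF assms(1)]])
qed

lemma direct_sum_transfer:
  assumes W: "submodule W" and iso: "isomorphic W W'" and d: "direct_sum A B W'"
  obtains A' B' where "direct_sum A' B' W" "isomorphic A' A" "isomorphic B' B"
proof -
  obtain \<beta> where \<beta>: "hom_on W W' \<beta>" "bij_betw \<beta> W W'"
    using iso unfolding isomorphic_def by blast
  define \<gamma> where "\<gamma> = inv_into W \<beta>"
  have \<gamma>: "hom_on W' W \<gamma>" "bij_betw \<gamma> W' W"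
    unfolding \<gamma>_def using hom_on_inv_into[OF W \<beta>] bij_betw_inv_into[OF \<beta>(2)] by auto
  then have "inj_on \<gamma> W'"
    by (simp add: bij_betw_def)
  then have "isomorphic (\<gamma> ` A) A" "isomorphic (\<gamma> ` B) B"
    using isomorphic_sym[OF direct_sumD(1)[OF d] isomorphic_image[OF \<gamma>(1)]]
      isomorphic_sym[OF direct_sumD(2)[OF d] isomorphic_image[OF \<gamma>(1)]]
      direct_sum_subset[OF d] by auto
  then show ?thesis
    using that direct_sum_image[OF direct_sum_submodule[OF d] \<gamma> d] by blast
qed

text \<open>Splitting \<open>M = M\<^sub>1 \<oplus> M\<^sub>2\<close> gives \<open>W = M\<^sub>1 \<oplus> (M\<^sub>2 \<oplus> X) = N\<^sub>1 \<oplus> (N\<^sub>2 \<oplus> Y)\<close>;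
  cancelling \<open>M\<^sub>1 \<cong> N\<^sub>1\<close> and then \<open>M\<^sub>2 \<cong> N\<^sub>2\<close> are two instances of smaller size.\<close>
lemma cancel_decomposable_step:
  assumes IH: "\<And>W' M' X' N' Y'. V.dim W' + V.dim M' < V.dim W + V.dim M \<Longrightarrow>
      direct_sum M' X' W' \<Longrightarrow> direct_sum N' Y' W' \<Longrightarrow> isomorphic M' N' \<Longrightarrow> isomorphic X' Y'"
    and dMX: "direct_sum M X W" and dNY: "direct_sum N Y W" and iso: "isomorphic M N"
    and dM: "direct_sum M1 M2 M" and M1: "M1 \<noteq> {0}" and M2: "M2 \<noteq> {0}"
  shows "isomorphic X Y"
proof -
  obtain \<alpha> where \<alpha>: "hom_on M N \<alpha>" "bij_betw \<alpha> M N"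
    using iso unfolding isomorphic_def by blast
  have M: "submodule M"
    using direct_sumD(1)[OF dMX] .
  have inj_\<alpha>: "inj_on \<alpha> M"
    using \<alpha>(2) by (simp add: bij_betw_def)
  define W2 where "W2 = {a + b |a b. a \<in> M2 \<and> b \<in> X}"
  define Y2 where "Y2 = {a + b |a b. a \<in> \<alpha> ` M2 \<and> b \<in> Y}"
  have dW2: "direct_sum M2 X W2" "direct_sum M1 W2 W"
    unfolding W2_def by (rule direct_sum_assoc[OF dMX dM])+
  have dN: "direct_sum (\<alpha> ` M1) (\<alpha> ` M2) N"
    by (rule direct_sum_image[OF M \<alpha> dM])
  have dY2: "direct_sum (\<alpha> ` M2) Y Y2" "direct_sum (\<alpha> ` M1) Y2 W"
    unfolding Y2_def by (rule direct_sum_assoc[OF dNY dN])+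
  have "V.dim M1 < V.dim M"
    by (rule dim_less_if_direct_sum[OF dM M2])
  then have "isomorphic W2 Y2"
    using IH[OF _ dW2(2) dY2(2) isomorphic_image[OF \<alpha>(1) inj_\<alpha>]] direct_sum_subset(1)[OF dM] by simp
  then obtain N2' Y' where dW2': "direct_sum N2' Y' W2"
    and iso_N2: "isomorphic N2' (\<alpha> ` M2)" and iso_Y: "isomorphic Y' Y"
    using direct_sum_transfer[OF direct_sum_submodule[OF dW2(1)] _ dY2(1)] by blast
  have "isomorphic M2 N2'"
    using isomorphic_trans[OF isomorphic_image[OF \<alpha>(1) inj_\<alpha> direct_sum_subset(2)[OF dM]]
        isomorphic_sym[OF direct_sumD(1)[OF dW2'] iso_N2]] .
  moreover have "V.dim W2 < V.dim W" "V.dim M2 \<le> V.dim M"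
    using dim_less_if_direct_sum[OF direct_sum_commute[OF dW2(2)] M1]
      dim_le_of_subset[OF direct_sum_subset(2)[OF dM]] by auto
  ultimately have "isomorphic X Y'"
    using IH[OF _ dW2(1) dW2'] by simp
  then show ?thesis
    using isomorphic_trans[OF _ iso_Y] by blast
qed

lemma direct_sum_cancel:
  "direct_sum M X W \<Longrightarrow> direct_sum N Y W \<Longrightarrow> isomorphic M N \<Longrightarrow> isomorphic X Y"
proof (induction "V.dim W + V.dim M" arbitrary: W M X N Y rule: less_induct)
  case less
  show ?case
  proof (cases "indecomposable M")
    case True
    then show ?thesis
      using cancel_indecomposable[OF less.prems] by blast
  next
    case False
    then obtain M1 M2 where M12: "direct_sum M1 M2 M" "M1 \<noteq> {0}" "M2 \<noteq> {0}"
      unfolding indecomposable_def by blast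
    show ?thesis
    proof (rule cancel_decomposable_step[OF _ less.prems M12])
      fix W' M' X' N' Y'
      assume "V.dim W' + V.dim M' < V.dim W + V.dim M" "direct_sum M' X' W'" "direct_sum N' Y' W'"
        "isomorphic M' N'"
      then show "isomorphic X' Y'"
        by (rule less.hyps)
    qed
  qed
qed

end

context fin_dim_module
begin

lemma submodule_range:
  assumes "a_module sA sM aM" "mod_hom sM aM sV aV h"
  shows "submodule (range h)"
  unfolding submodule_def
proof (intro conjI ballI allI)
  show "0 \<in> range h"
    using rangeI[of h 0] mod_hom_zero[OF assms(2)] by simp
next
  fix x y
  assume "x \<in> range h" "y \<in> range h"
  then obtain u v where "x = h u" "y = h v"
    by blast
  then show "x + y \<in> range h"
    using rangeI[of h "u + v"] mod_hom_add[OF assms(2)] by simp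
next
  fix a x
  assume "x \<in> range h"
  then obtain u where "x = h u"
    by blast
  then show "aV a x \<in> range h"
    using rangeI[of h "aM a u"] mod_hom_act[OF assms(2)] by simp
qed

lemma direct_sum_range_section:
  assumes s: "ses sM aM sV aV sN aN f g" and M: "a_module sA sM aM" and N: "a_module sA sN aN"
    and t: "mod_hom sN aN sV aV t" "\<And>n. g (t n) = n"
  shows "direct_sum (range t) (range f) UNIV"
proof (rule direct_sumI[OF submodule_range[OF N t(1)] submodule_range[OF M ses_mod_hom_inj[OF s]]])
  fix x
  assume "x \<in> range t" "x \<in> range f"
  then obtain n m where "x = t n" "x = f m"
    by blast
  then have "n = 0"
    using t(2)[of n] ses_comp_eq_0[OF s, of m] by simp
  then show "x = 0"
    using \<open>x = t n\<close> mod_hom_zero[OF t(1)] by simp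
next
  fix v
  have "g (v - t (g v)) = 0"
    using mod_hom_diff[OF ses_mod_hom_surj[OF s]] t(2) by simp
  then have "v - t (g v) \<in> range f"
    using ses_kernel_eq_range[OF s] by blast
  then show "\<exists>a\<in>range t. \<exists>b\<in>range f. v = a + b"
    by (intro bexI[of _ "t (g v)"] bexI[of _ "v - t (g v)"]) auto
qed simp

lemma isomorphic_ranges:
  assumes h: "mod_hom sN aN sV aV h" "inj h"
    and k: "mod_hom sN aN sV aV k" "inj k"
  shows "isomorphic (range h) (range k)"
proof -
  define \<phi> where "\<phi> v = k (inv h v)" for v
  have \<phi>_h: "\<phi> (h n) = k n" for n
    unfolding \<phi>_def using h(2) by simp
  have "hom_on (range h) (range k) \<phi>"
    unfolding hom_on_def
    using \<phi>_h mod_hom_add[OF h(1)] mod_hom_add[OF k(1)] mod_hom_act[OF h(1)] mod_hom_act[OF k(1)]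
    by (auto simp flip: mod_hom_add[OF h(1)] mod_hom_act[OF h(1)])
  moreover have "bij_betw \<phi> (range h) (range k)"
    using \<phi>_h k(2) by (auto simp: bij_betw_def inj_on_def image_iff dest: injD)
  ultimately show ?thesis
    unfolding isomorphic_def by blast
qed

lemma mod_iso_if_isomorphic_ranges:
  assumes N: "a_module sA sN aN" and M: "a_module sA sM aM"
    and h: "mod_hom sN aN sV aV h" "inj h" and k: "mod_hom sM aM sV aV k" "inj k"
    and iso: "isomorphic (range h) (range k)"
  shows "mod_iso sN aN sM aM"
proof -
  obtain \<psi> where \<psi>: "hom_on (range h) (range k) \<psi>" "bij_betw \<psi> (range h) (range k)"
    using iso unfolding isomorphic_def by blast
  have "\<psi> (h (x + y)) = \<psi> (h x) + \<psi> (h y)" "\<psi> (h (sN c x)) = sV c (\<psi> (h x))"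
    "\<psi> (h (aN a x)) = aV a (\<psi> (h x))" for x y c a
    by (simp_all add: mod_hom_add[OF h(1)] mod_hom_scale[OF h(1)] mod_hom_act[OF h(1)]
        hom_onD(2,3)[OF \<psi>(1)] hom_on_scale[OF \<psi>(1)])
  then have "mod_hom sN aN sV aV (\<lambda>n. \<psi> (h n))"
    using a_module_vector_space[OF N] V.vector_space_axioms
    unfolding mod_hom_def Vector_Spaces.linear_iff by blast
  moreover have "\<psi> (h n) \<in> range k" for n
    using hom_onD(1)[OF \<psi>(1)] by blast
  ultimately have l: "mod_hom sN aN sM aM (\<lambda>n. inv k (\<psi> (h n)))"
    "\<And>n. k (inv k (\<psi> (h n))) = \<psi> (h n)"
    using mod_hom_inv_into_comp[OF k] a_module_vector_space[OF N] a_module_vector_space[OF M]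
    by blast+
  have "inj (\<lambda>n. inv k (\<psi> (h n)))"
  proof (rule injI)
    fix a b
    assume "inv k (\<psi> (h a)) = inv k (\<psi> (h b))"
    then have "\<psi> (h a) = \<psi> (h b)"
      using l(2) by metis
    then have "h a = h b"
      using \<psi>(2) unfolding bij_betw_def by (auto dest: inj_onD)
    then show "a = b"
      using h(2) by (auto dest: injD)
  qed
  moreover have "m \<in> range (\<lambda>n. inv k (\<psi> (h n)))" for m
  proof -
    have "k m \<in> \<psi> ` range h"
      using \<psi>(2) unfolding bij_betw_def by simp
    then obtain n where "k m = \<psi> (h n)"
      by blast
    then have "inv k (\<psi> (h n)) = m"
      using inv_f_f[OF k(2)] by metis
    then show ?thesis
      by (intro range_eqI[of _ _ n]) simp
  qed
  then have "surj (\<lambda>n. inv k (\<psi> (h n)))"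
    by blast
  ultimately show ?thesis
    unfolding mod_iso_def bij_def using l(1) by blast
qed

end

text \<open>If both sequences split, with sections \<open>t\<close> of \<open>g\<close> and \<open>t'\<close> of \<open>g'\<close>, then
  \<open>x = range t \<oplus> range f = range t' \<oplus> range f'\<close>, and \<open>t\<close>, \<open>f'\<close> both embed \<open>x\<^sub>1\<close>;
  cancelling gives \<open>x\<^sub>2 \<cong> range f \<cong> range t' \<cong> x\<^sub>3\<close>.\<close>
lemma mod_iso_if_ses_split:
  assumes X: "a_module sA sX aX" "fin_dim sX" and M1: "a_module sA s1 a1"
    and M2: "a_module sA s2 a2" and M3: "a_module sA s3 a3"
    and e1: "ses s2 a2 sX aX s1 a1 f g" and e2: "ses s1 a1 sX aX s3 a3 f' g'"
    and split1: "ses_splits s2 a2 sX aX s1 a1 f g" and split2: "ses_splits s1 a1 sX aX s3 a3 f' g'"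
  shows "mod_iso s3 a3 s2 a2"
proof -
  interpret fin_dim_module sA sX aX
    using X by unfold_locales
  obtain t where t: "mod_hom s1 a1 sX aX t" "\<And>n. g (t n) = n"
    using split1 unfolding ses_splits_def by blast
  obtain t' where t': "mod_hom s3 a3 sX aX t'" "\<And>n. g' (t' n) = n"
    using split2 unfolding ses_splits_def by blast
  have "inj t" "inj t'"
    using t(2) t'(2) by (metis injI)+
  have "isomorphic (range t) (range f')"
    by (rule isomorphic_ranges[OF t(1) \<open>inj t\<close> ses_mod_hom_inj[OF e2] ses_inj[OF e2]])
  then have "isomorphic (range f) (range t')"
    by (rule direct_sum_cancel[OF direct_sum_range_section[OF e1 M2 M1 t]
          direct_sum_commute[OF direct_sum_range_section[OF e2 M1 M3 t']]])
  then have "isomorphic (range t') (range f)"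
    by (rule isomorphic_sym[OF submodule_range[OF M2 ses_mod_hom_inj[OF e1]]])
  then show ?thesis
    by (rule mod_iso_if_isomorphic_ranges[OF M3 M2 t'(1) \<open>inj t'\<close>
          ses_mod_hom_inj[OF e1] ses_inj[OF e1]])
qed

theorem lemma6p2:
  fixes sA :: "'k::field \<Rightarrow> 'a::ring_1 \<Rightarrow> 'a"
    and sX :: "'k \<Rightarrow> 'x::ab_group_add \<Rightarrow> 'x" and aX :: "'a \<Rightarrow> 'x \<Rightarrow> 'x"
    and s1 :: "'k \<Rightarrow> 'x1::ab_group_add \<Rightarrow> 'x1" and a1 :: "'a \<Rightarrow> 'x1 \<Rightarrow> 'x1"
    and s2 :: "'k \<Rightarrow> 'x2::ab_group_add \<Rightarrow> 'x2" and a2 :: "'a \<Rightarrow> 'x2 \<Rightarrow> 'x2"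
    and s3 :: "'k \<Rightarrow> 'x3::ab_group_add \<Rightarrow> 'x3" and a3 :: "'a \<Rightarrow> 'x3 \<Rightarrow> 'x3"
    and f :: "'x2 \<Rightarrow> 'x" and g :: "'x \<Rightarrow> 'x1"
    and f' :: "'x1 \<Rightarrow> 'x" and g' :: "'x \<Rightarrow> 'x3"
  assumes "k_algebra sA"
    and "a_module sA sX aX" "a_module sA s1 a1" "a_module sA s2 a2" "a_module sA s3 a3"
    and "fin_dim sX" "fin_dim s1" "fin_dim s2" "fin_dim s3"
    and "ses s2 a2 sX aX s1 a1 f g"
    and "ses s1 a1 sX aX s3 a3 f' g'"
    and "ext1_self_zero sA s1 a1"
    and "dim_hom s1 a1 s2 a2 = dim_hom s1 a1 s3 a3"
    and "dim_hom s2 a2 s1 a1 = dim_hom s3 a3 s1 a1"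
  shows "ses_splits s2 a2 sX aX s1 a1 f g \<and> ses_splits s1 a1 sX aX s3 a3 f' g'
         \<and> mod_iso s3 a3 s2 a2"
proof -
  \<comment> \<open>The argument only uses the module axioms.\<close>
  have split1: "ses_splits s2 a2 sX aX s1 a1 f g"
    by (rule ses_splits_if_dim_hom_from_eq[OF assms(2,6,3,7,4,8,5,10-13)])
  moreover have split2: "ses_splits s1 a1 sX aX s3 a3 f' g'"
    by (rule ses_splits_if_dim_hom_to_eq[OF assms(2,6,3,7,4,5,9,10,11) split1 assms(14)])
  moreover have "mod_iso s3 a3 s2 a2"
    by (rule mod_iso_if_ses_split[OF assms(2,6,3,4,5,10,11) split1 split2])
  ultimately show ?thesis
    by blast
qed

end
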